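(* Let $C$ be a ring of characteristic zero. For any non-empty set $X$, the free Baxter algebra $\text{Ш}_C(X)$ is not a noetherian algebra.
   Context: For a commutative $C$-algebra $A$ and $\lambda\in C$, the shuffle Baxter algebra $\text{Ш}_C(A)=\bigoplus_{k\in\mathbb{N}}A^{\otimes(k+1)}$ has product $(x_0\otimes x_1\otimes\cdots\otimes x_m)(y_0\otimes y_1\otimes\cdots\otimes y_n)=x_0y_0\otimes(\text{sum over mixable shuffles of } x_1\otimes\cdots\otimes x_m \text{ and } y_1\otimes\cdots\otimes y_n)$, where a mixable shuffle is a shuffle of the two words in which some adjacent pairs (an $x_i$ immediately followed by a $y_j$) are replaced by the product $x_iy_j$, each such merger contributing a factor $\lambda$; the Baxter operator is $P_A(x_0\otimes\cdots\otimes x_n)=\mathbf{1}_A\otimes x_0\otimes\cdots\otimes x_n$. It is the free Baxter $C$-algebra of weight $\lambda$ on $A$. For a set $X$, $\text{Ш}_C(X):=\text{Ш}_C(C[X])$ is the free Baxter $C$-algebra of weight $\lambda$ on $X$ (here $\lambda\in C$ arbitrary). *)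

theory Defs
  imports "HOL-Algebra.Ring_Divisibility" "HOL-Library.Multiset"
begin

text \<open>
  Concrete model of the shuffle Baxter algebra Sha_C(X) = Sha_C(C[X]).
  C[X] is the polynomial ring in commuting variables X over C; it is the free
  C-module on the monomials, i.e. finite multisets over X, with monomial product
  given by multiset sum.  Hence C[X]^{tensor (k+1)} is the free C-module on
  (k+1)-tuples of monomials, and Sha_C(X) = direct sum over k is the free C-module on
  non-empty lists of monomials.
\<close>

type_synonym 'x word = "'x multiset list"

definition sha_basis :: "'x set \<Rightarrow> 'x word set" where
  "sha_basis X = {w. w \<noteq> [] \<and> (\<forall>m\<in>set w. set_mset m \<subseteq> X)}"

text \<open>A mixable shuffle of two words is encoded by a pattern over L, R, B:
  L = next letter of the first word, R = next letter of the second word,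
  B = the next letter x_i of the first word immediately followed by the next
  letter y_j of the second word, merged into the product x_i y_j (factor lambda).\<close>

datatype mix_step = L | R | B

fun mix :: "mix_step list \<Rightarrow> 'x word \<Rightarrow> 'x word \<Rightarrow> 'x word" where
  "mix [] xs ys = []"
| "mix (L # p) (x # xs) ys = x # mix p xs ys"
| "mix (R # p) xs (y # ys) = y # mix p xs ys"
| "mix (B # p) (x # xs) (y # ys) = (x + y) # mix p xs ys"
| "mix _ _ _ = []"

definition mix_patterns :: "nat \<Rightarrow> nat \<Rightarrow> mix_step list set" where
  "mix_patterns m n = {p. count_list p L + count_list p B = m
                        \<and> count_list p R + count_list p B = n}"

text \<open>Coefficient of the basis word w in the product of basis words
  (x_0 x_1 ... x_m)(y_0 y_1 ... y_n) = x_0 y_0 (sum over mixable shuffles).\<close>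

definition basis_prod :: "'c::comm_ring_1 \<Rightarrow> 'x word \<Rightarrow> 'x word \<Rightarrow> 'x word \<Rightarrow> 'c" where
  "basis_prod lam u v w =
     (\<Sum>p\<in>{p \<in> mix_patterns (length u - 1) (length v - 1).
              (hd u + hd v) # mix p (tl u) (tl v) = w}.
        lam ^ count_list p B)"

definition supp :: "('x word \<Rightarrow> 'c::zero) \<Rightarrow> 'x word set" where
  "supp f = {w. f w \<noteq> 0}"

definition Sha :: "'c::comm_ring_1 \<Rightarrow> 'x set \<Rightarrow> ('x word \<Rightarrow> 'c) ring" where
  "Sha lam X = \<lparr>
     carrier = {f. finite (supp f) \<and> supp f \<subseteq> sha_basis X},
     monoid.mult = (\<lambda>f g w. \<Sum>u\<in>supp f. \<Sum>v\<in>supp g. f u * g v * basis_prod lam u v w),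
     one = (\<lambda>w. if w = [{#}] then 1 else 0),
     zero = (\<lambda>w. 0),
     add = (\<lambda>f g w. f w + g w) \<rparr>"

end

theory Submission
  imports Defs
begin

(*
  Write 1 for the empty monomial and x for a variable of X.  The product of two basis words is
  (x_0 y_0) followed by the quasi-shuffle of their tails; the quasi-shuffle is associative by
  induction on the total length, which makes Sha a ring.

  The ideal I spanned by the words whose tail contains a variable is not finitely generated.
  For every m there is a linear functional psi_m that vanishes on words of length at most m + 1,
  takes the value (-1)^m on the word 1 x 1^m, and satisfies psi_m (g f) = g_1 psi_m f for f in I,
  where g_1 is the coefficient of the word 1 in g.  Its kernel in I is then an ideal; if the
  generators of I have length at most m it contains all of I, which is absurd.

  On words 1 t, psi_m is a functional c of t supported on words of content x, and the
  multiplicativity amounts to c vanishing on all quasi-shuffles 1^a * t with a > 0.  Because the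
  quasi-shuffle is compatible with deconcatenation, this property holds for gamma delta_x and is
  preserved by c |-> [delta_1, c] gamma, where products of functionals are concatenation products
  and gamma (1^n) = (-lam)^n; iterating m times gives psi_m.  Characteristic zero is only used
  to know that 1 \<noteq> 0.
*)

section \<open>Finitely supported functions on words\<close>

definition delta :: "'a \<Rightarrow> 'a \<Rightarrow> 'c::comm_ring_1" where
  "delta a = (\<lambda>w. if w = a then 1 else 0)"

abbreviation fin_supp :: "('x word \<Rightarrow> 'c::zero) \<Rightarrow> bool" where
  "fin_supp f \<equiv> finite (supp f)"

definition bilinear_ext :: "('x word \<Rightarrow> 'x word \<Rightarrow> 'x word \<Rightarrow> 'c::comm_ring_1)
    \<Rightarrow> ('x word \<Rightarrow> 'c) \<Rightarrow> ('x word \<Rightarrow> 'c) \<Rightarrow> 'x word \<Rightarrow> 'c" where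
  "bilinear_ext b f g = (\<lambda>w. \<Sum>u\<in>supp f. \<Sum>v\<in>supp g. f u * g v * b u v w)"

lemma supp_delta: "supp (delta a :: 'x word \<Rightarrow> 'c::comm_ring_1) \<subseteq> {a}"
  by (auto simp: supp_def delta_def)

lemma fin_supp_delta [simp]: "fin_supp (delta a :: 'x word \<Rightarrow> 'c::comm_ring_1)"
  using supp_delta finite_subset by blast

lemma supp_plus: "supp (\<lambda>w. f w + g w) \<subseteq> supp f \<union> supp (g :: 'x word \<Rightarrow> 'c::comm_ring_1)"
  by (auto simp: supp_def)

lemma supp_scale: "supp (\<lambda>w. c * f w) \<subseteq> supp (f :: 'x word \<Rightarrow> 'c::comm_ring_1)"
  by (auto simp: supp_def)

lemma supp_uminus: "supp (\<lambda>w. - f w) = supp (f :: 'x word \<Rightarrow> 'c::comm_ring_1)"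
  by (simp add: supp_def)

lemma fin_supp_plus [simp]: "fin_supp f \<Longrightarrow> fin_supp g \<Longrightarrow> fin_supp (\<lambda>w. f w + (g w :: 'c::comm_ring_1))"
  by (rule finite_subset[OF supp_plus]) auto

lemma fin_supp_scale [simp]: "fin_supp f \<Longrightarrow> fin_supp (\<lambda>w. c * (f w :: 'c::comm_ring_1))"
  by (rule finite_subset[OF supp_scale])

lemma sum_supp_delta:
  assumes "fin_supp g" shows "(\<Sum>v\<in>supp g. g v * delta v w) = g w"
proof -
  have "(\<Sum>v\<in>supp g. g v * delta v w) = (\<Sum>v\<in>supp g. if v = w then g v else 0)"
    by (rule sum.cong) (auto simp: delta_def)
  also have "\<dots> = g w"
    using assms by (simp add: sum.delta) (auto simp: supp_def)
  finally show ?thesis .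
qed

lemma bilinear_ext_eq_sum:
  assumes "finite S" "supp f \<subseteq> S" "finite T" "supp g \<subseteq> T"
  shows "bilinear_ext b f g w = (\<Sum>u\<in>S. \<Sum>v\<in>T. f u * g v * b u v w)"
proof -
  have "bilinear_ext b f g w = (\<Sum>u\<in>S. \<Sum>v\<in>supp g. f u * g v * b u v w)"
    unfolding bilinear_ext_def
    by (rule sum.mono_neutral_left) (use assms in \<open>auto simp: supp_def\<close>)
  also have "\<dots> = (\<Sum>u\<in>S. \<Sum>v\<in>T. f u * g v * b u v w)"
    by (rule sum.cong[OF refl], rule sum.mono_neutral_left) (use assms in \<open>auto simp: supp_def\<close>)
  finally show ?thesis .
qed

lemma supp_bilinear_ext:
  "supp (bilinear_ext b f g) \<subseteq> (\<Union>u\<in>supp f. \<Union>v\<in>supp g. supp (b u v))"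
proof
  fix w assume "w \<in> supp (bilinear_ext b f g)"
  then have "(\<Sum>u\<in>supp f. \<Sum>v\<in>supp g. f u * g v * b u v w) \<noteq> 0"
    by (simp add: supp_def bilinear_ext_def)
  then obtain u v where uv: "u \<in> supp f" "v \<in> supp g" and "f u * g v * b u v w \<noteq> 0"
    by (meson sum.neutral)
  then have "w \<in> supp (b u v)" by (auto simp: supp_def)
  with uv show "w \<in> (\<Union>u\<in>supp f. \<Union>v\<in>supp g. supp (b u v))" by blast
qed

lemma fin_supp_bilinear_ext:
  "fin_supp f \<Longrightarrow> fin_supp g \<Longrightarrow> (\<And>u v. fin_supp (b u v)) \<Longrightarrow> fin_supp (bilinear_ext b f g)"
  by (rule finite_subset[OF supp_bilinear_ext]) auto

lemma bilinear_ext_add_left: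
  assumes "fin_supp f" "fin_supp g" "fin_supp h"
  shows "bilinear_ext b (\<lambda>w. f w + g w) h = (\<lambda>w. bilinear_ext b f h w + bilinear_ext b g h w)"
proof
  fix w
  let ?S = "supp f \<union> supp g"
  have "bilinear_ext b (\<lambda>w. f w + g w) h w = (\<Sum>u\<in>?S. \<Sum>v\<in>supp h. (f u + g u) * h v * b u v w)"
    by (rule bilinear_ext_eq_sum) (use assms supp_plus in auto)
  also have "\<dots> = (\<Sum>u\<in>?S. \<Sum>v\<in>supp h. f u * h v * b u v w)
       + (\<Sum>u\<in>?S. \<Sum>v\<in>supp h. g u * h v * b u v w)"
    by (simp add: sum.distrib distrib_right)
  also have "\<dots> = bilinear_ext b f h w + bilinear_ext b g h w"
    by (subst (1 2) bilinear_ext_eq_sum[where S = ?S and T = "supp h"]) (use assms in auto)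
  finally show "bilinear_ext b (\<lambda>w. f w + g w) h w = bilinear_ext b f h w + bilinear_ext b g h w" .
qed

lemma bilinear_ext_add_right:
  assumes "fin_supp f" "fin_supp g" "fin_supp h"
  shows "bilinear_ext b h (\<lambda>w. f w + g w) = (\<lambda>w. bilinear_ext b h f w + bilinear_ext b h g w)"
proof
  fix w
  let ?S = "supp f \<union> supp g"
  have "bilinear_ext b h (\<lambda>w. f w + g w) w = (\<Sum>u\<in>supp h. \<Sum>v\<in>?S. h u * (f v + g v) * b u v w)"
    by (rule bilinear_ext_eq_sum) (use assms supp_plus in auto)
  also have "\<dots> = (\<Sum>u\<in>supp h. \<Sum>v\<in>?S. h u * f v * b u v w)
       + (\<Sum>u\<in>supp h. \<Sum>v\<in>?S. h u * g v * b u v w)"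
    by (simp add: sum.distrib distrib_right distrib_left)
  also have "\<dots> = bilinear_ext b h f w + bilinear_ext b h g w"
    by (subst (1 2) bilinear_ext_eq_sum[where T = ?S and S = "supp h"]) (use assms in auto)
  finally show "bilinear_ext b h (\<lambda>w. f w + g w) w = bilinear_ext b h f w + bilinear_ext b h g w" .
qed

lemma bilinear_ext_scale_left:
  assumes "fin_supp f" "fin_supp h"
  shows "bilinear_ext b (\<lambda>w. c * f w) h = (\<lambda>w. c * bilinear_ext b f h w)"
proof
  fix w
  have "bilinear_ext b (\<lambda>w. c * f w) h w = (\<Sum>u\<in>supp f. \<Sum>v\<in>supp h. (c * f u) * h v * b u v w)"
    by (rule bilinear_ext_eq_sum) (use assms supp_scale in auto)
  then show "bilinear_ext b (\<lambda>w. c * f w) h w = c * bilinear_ext b f h w"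
    by (simp add: bilinear_ext_def sum_distrib_left mult_ac)
qed

lemma bilinear_ext_scale_right:
  assumes "fin_supp f" "fin_supp h"
  shows "bilinear_ext b h (\<lambda>w. c * f w) = (\<lambda>w. c * bilinear_ext b h f w)"
proof
  fix w
  have "bilinear_ext b h (\<lambda>w. c * f w) w = (\<Sum>u\<in>supp h. \<Sum>v\<in>supp f. h u * (c * f v) * b u v w)"
    by (rule bilinear_ext_eq_sum) (use assms supp_scale in auto)
  then show "bilinear_ext b h (\<lambda>w. c * f w) w = c * bilinear_ext b h f w"
    by (simp add: bilinear_ext_def sum_distrib_left mult_ac)
qed

lemma bilinear_ext_delta_delta: "bilinear_ext b (delta u) (delta v) = b u v"
proof
  fix w
  show "bilinear_ext b (delta u) (delta v) w = b u v w"
    by (subst bilinear_ext_eq_sum[where S = "{u}" and T = "{v}"])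
       (auto simp: supp_delta, simp add: delta_def)
qed

lemma bilinear_ext_delta_left:
  assumes "fin_supp g"
  shows "bilinear_ext b (delta u) g w = (\<Sum>v\<in>supp g. g v * b u v w)"
  by (subst bilinear_ext_eq_sum[where S = "{u}" and T = "supp g"])
     (use assms supp_delta in auto, simp add: delta_def)

lemma bilinear_ext_delta_right:
  assumes "fin_supp g"
  shows "bilinear_ext b g (delta v) w = (\<Sum>u\<in>supp g. g u * b u v w)"
  by (subst bilinear_ext_eq_sum[where T = "{v}" and S = "supp g"])
     (use assms supp_delta in auto, simp add: delta_def)

lemma bilinear_ext_commute:
  assumes "\<And>u v. b u v = b v u"
  shows "bilinear_ext b f g = bilinear_ext b g f"
  unfolding bilinear_ext_def by (rule ext, subst sum.swap) (simp add: assms mult_ac)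

lemma sum_swap_2_2:
  "(\<Sum>t\<in>T. \<Sum>z\<in>Z. \<Sum>u\<in>U. \<Sum>v\<in>V. F t z u v) = (\<Sum>u\<in>U. \<Sum>v\<in>V. \<Sum>z\<in>Z. \<Sum>t\<in>T. F t z u v)"
proof -
  have "(\<Sum>t\<in>T. \<Sum>z\<in>Z. \<Sum>u\<in>U. \<Sum>v\<in>V. F t z u v) = (\<Sum>t\<in>T. \<Sum>u\<in>U. \<Sum>v\<in>V. \<Sum>z\<in>Z. F t z u v)"
    by (intro sum.cong refl) (subst sum.swap, intro sum.cong refl, rule sum.swap)
  also have "\<dots> = (\<Sum>u\<in>U. \<Sum>v\<in>V. \<Sum>t\<in>T. \<Sum>z\<in>Z. F t z u v)"
    by (subst sum.swap, intro sum.cong refl, rule sum.swap)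
  also have "\<dots> = (\<Sum>u\<in>U. \<Sum>v\<in>V. \<Sum>z\<in>Z. \<Sum>t\<in>T. F t z u v)"
    by (intro sum.cong refl, rule sum.swap)
  finally show ?thesis .
qed

lemma sum_swap_2_1:
  "(\<Sum>v\<in>V. \<Sum>z\<in>Z. \<Sum>s\<in>S. F v z s) = (\<Sum>s\<in>S. \<Sum>v\<in>V. \<Sum>z\<in>Z. F v z s)"
  by (subst sum.swap, intro sum.cong refl, rule sum.swap)

lemma bilinear_ext_bilinear_ext_left:
  assumes "\<And>u v. fin_supp (b u v)" "fin_supp f" "fin_supp g" "fin_supp h"
  shows "bilinear_ext b (bilinear_ext b f g) h w = (\<Sum>u\<in>supp f. \<Sum>v\<in>supp g. \<Sum>z\<in>supp h.
      f u * g v * h z * bilinear_ext b (b u v) (delta z) w)"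
proof -
  define S where "S = (\<Union>u\<in>supp f. \<Union>v\<in>supp g. supp (b u v))"
  have "finite S" using assms by (auto simp: S_def)
  have "bilinear_ext b (bilinear_ext b f g) h w
      = (\<Sum>t\<in>S. \<Sum>z\<in>supp h. bilinear_ext b f g t * h z * b t z w)"
    by (rule bilinear_ext_eq_sum)
       (use \<open>finite S\<close> assms supp_bilinear_ext[of b f g] in \<open>auto simp: S_def\<close>)
  also have "\<dots> = (\<Sum>t\<in>S. \<Sum>z\<in>supp h. \<Sum>u\<in>supp f. \<Sum>v\<in>supp g.
      f u * g v * h z * (b u v t * b t z w))"
    unfolding bilinear_ext_def sum_distrib_right sum_distrib_left by (simp add: mult_ac)
  also have "\<dots> = (\<Sum>u\<in>supp f. \<Sum>v\<in>supp g. \<Sum>z\<in>supp h.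
      f u * g v * h z * (\<Sum>t\<in>S. b u v t * b t z w))"
    by (subst sum_swap_2_2) (simp add: sum_distrib_left)
  also have "\<dots> = (\<Sum>u\<in>supp f. \<Sum>v\<in>supp g. \<Sum>z\<in>supp h.
      f u * g v * h z * bilinear_ext b (b u v) (delta z) w)"
  proof (intro sum.cong refl)
    fix u v z assume "u \<in> supp f" "v \<in> supp g"
    then have "supp (b u v) \<subseteq> S" by (auto simp: S_def)
    then show "f u * g v * h z * (\<Sum>t\<in>S. b u v t * b t z w)
        = f u * g v * h z * bilinear_ext b (b u v) (delta z) w"
      by (subst bilinear_ext_eq_sum[where S = S and T = "{z}"])
         (use \<open>finite S\<close> supp_delta in auto, simp add: delta_def)
  qed
  finally show ?thesis .
qed

lemma bilinear_ext_bilinear_ext_right: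
  assumes "\<And>u v. fin_supp (b u v)" "fin_supp f" "fin_supp g" "fin_supp h"
  shows "bilinear_ext b f (bilinear_ext b g h) w = (\<Sum>u\<in>supp f. \<Sum>v\<in>supp g. \<Sum>z\<in>supp h.
      f u * g v * h z * bilinear_ext b (delta u) (b v z) w)"
proof -
  define S where "S = (\<Union>v\<in>supp g. \<Union>z\<in>supp h. supp (b v z))"
  have "finite S" using assms by (auto simp: S_def)
  have "bilinear_ext b f (bilinear_ext b g h) w
      = (\<Sum>u\<in>supp f. \<Sum>s\<in>S. f u * bilinear_ext b g h s * b u s w)"
    by (rule bilinear_ext_eq_sum)
       (use \<open>finite S\<close> assms supp_bilinear_ext[of b g h] in \<open>auto simp: S_def\<close>)
  also have "\<dots> = (\<Sum>u\<in>supp f. \<Sum>v\<in>supp g. \<Sum>z\<in>supp h.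
      f u * g v * h z * (\<Sum>s\<in>S. b v z s * b u s w))"
    unfolding bilinear_ext_def
    by (rule sym, rule sum.cong[OF refl])
       (simp only: sum_distrib_left sum_distrib_right, subst sum_swap_2_1, simp add: mult_ac)
  also have "\<dots> = (\<Sum>u\<in>supp f. \<Sum>v\<in>supp g. \<Sum>z\<in>supp h.
      f u * g v * h z * bilinear_ext b (delta u) (b v z) w)"
  proof (intro sum.cong refl)
    fix u v z assume "v \<in> supp g" "z \<in> supp h"
    then have "supp (b v z) \<subseteq> S" by (auto simp: S_def)
    then show "f u * g v * h z * (\<Sum>s\<in>S. b v z s * b u s w)
        = f u * g v * h z * bilinear_ext b (delta u) (b v z) w"
      by (subst bilinear_ext_eq_sum[where S = "{u}" and T = S])
         (use \<open>finite S\<close> supp_delta in auto, simp add: delta_def)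
  qed
  finally show ?thesis .
qed

lemma bilinear_ext_assoc:
  assumes "\<And>u v. fin_supp (b u v)" "fin_supp f" "fin_supp g" "fin_supp h"
    and assoc_basis: "\<And>u v z. u \<in> supp f \<Longrightarrow> v \<in> supp g \<Longrightarrow> z \<in> supp h \<Longrightarrow>
        bilinear_ext b (b u v) (delta z) = bilinear_ext b (delta u) (b v z)"
  shows "bilinear_ext b (bilinear_ext b f g) h = bilinear_ext b f (bilinear_ext b g h)"
proof
  fix w
  show "bilinear_ext b (bilinear_ext b f g) h w = bilinear_ext b f (bilinear_ext b g h) w"
    unfolding bilinear_ext_bilinear_ext_left[OF assms(1-4)] bilinear_ext_bilinear_ext_right[OF assms(1-4)]
    by (intro sum.cong refl) (simp add: assoc_basis)
qed

section \<open>The quasi-shuffle product of tails\<close>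

primrec qshuffle :: "'c::comm_ring_1 \<Rightarrow> 'x word \<Rightarrow> 'x word \<Rightarrow> 'x word \<Rightarrow> 'c" where
  "qshuffle lam v u [] = (if v = [] \<and> u = [] then 1 else 0)"
| "qshuffle lam v u (z # w) =
     (if v \<noteq> [] \<and> hd v = z then qshuffle lam (tl v) u w else 0)
   + (if u \<noteq> [] \<and> hd u = z then qshuffle lam v (tl u) w else 0)
   + (if v \<noteq> [] \<and> u \<noteq> [] \<and> hd v + hd u = z then lam * qshuffle lam (tl v) (tl u) w else 0)"

definition prepend :: "'x multiset \<Rightarrow> ('x word \<Rightarrow> 'c::comm_ring_1) \<Rightarrow> 'x word \<Rightarrow> 'c" where
  "prepend x F = (\<lambda>w. case w of [] \<Rightarrow> 0 | z # w' \<Rightarrow> if z = x then F w' else 0)"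

lemma qshuffle_Nil_left: "qshuffle lam [] u = delta u"
proof
  show "qshuffle lam [] u w = delta u w" for w
    by (induction w arbitrary: u; case_tac u) (auto simp: delta_def)
qed

lemma qshuffle_Nil_right: "qshuffle lam v [] = delta v"
proof
  show "qshuffle lam v [] w = delta v w" for w
    by (induction w arbitrary: v; case_tac v) (auto simp: delta_def)
qed

lemma qshuffle_commute: "qshuffle lam v u w = qshuffle lam u v w"
  by (induction w arbitrary: v u) (simp_all add: add_ac)

lemma qshuffle_Cons_Cons: "qshuffle lam (x # xs) (y # ys) = (\<lambda>w.
    prepend x (qshuffle lam xs (y # ys)) w + prepend y (qshuffle lam (x # xs) ys) w
    + lam * prepend (x + y) (qshuffle lam xs ys) w)"
  by (rule ext, case_tac w) (auto simp: prepend_def)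

lemma prepend_delta: "prepend x (delta u) = delta (x # u)"
  by (rule ext) (auto simp: prepend_def delta_def split: list.splits)

lemma supp_prepend: "supp (prepend x F) = Cons x ` supp F"
  by (auto simp: supp_def prepend_def neq_Nil_conv split: list.splits)

lemma fin_supp_prepend [simp]: "fin_supp F \<Longrightarrow> fin_supp (prepend x F)"
  by (simp add: supp_prepend)

lemma prepend_add: "prepend x (\<lambda>w. F w + G w) = (\<lambda>w. prepend x F w + prepend x G w)"
  by (rule ext) (auto simp: prepend_def split: list.splits)

lemma prepend_scale: "prepend x (\<lambda>w. c * F w) = (\<lambda>w. c * prepend x F w)"
  by (rule ext) (auto simp: prepend_def split: list.splits)

lemma prepend_sum:
  "prepend x (\<lambda>w. \<Sum>u\<in>U. \<Sum>v\<in>V. f u v * h u v w) w0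
    = (\<Sum>u\<in>U. \<Sum>v\<in>V. f u v * prepend x (h u v) w0)"
  by (cases w0) (auto simp: prepend_def)

definition merged_letters :: "'x word \<Rightarrow> 'x word \<Rightarrow> 'x multiset set" where
  "merged_letters v u = (\<lambda>(a, b). a + b) ` (insert {#} (set v) \<times> insert {#} (set u))"

lemma merged_letters_mono:
  "set v' \<subseteq> set v \<Longrightarrow> set u' \<subseteq> set u \<Longrightarrow> merged_letters v' u' \<subseteq> merged_letters v u"
  unfolding merged_letters_def by blast

lemma set_tl_subset: "set (tl v) \<subseteq> set v"
  by (cases v) auto

lemma qshuffle_Cons_nonzeroE:
  assumes "qshuffle lam v u (z # w) \<noteq> 0"
  obtains (left) "v \<noteq> []" "hd v = z" "qshuffle lam (tl v) u w \<noteq> 0"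
    | (right) "u \<noteq> []" "hd u = z" "qshuffle lam v (tl u) w \<noteq> 0"
    | (merge) "v \<noteq> []" "u \<noteq> []" "hd v + hd u = z" "qshuffle lam (tl v) (tl u) w \<noteq> 0"
proof -
  have "(v \<noteq> [] \<and> hd v = z \<and> qshuffle lam (tl v) u w \<noteq> 0)
      \<or> (u \<noteq> [] \<and> hd u = z \<and> qshuffle lam v (tl u) w \<noteq> 0)
      \<or> (v \<noteq> [] \<and> u \<noteq> [] \<and> hd v + hd u = z \<and> qshuffle lam (tl v) (tl u) w \<noteq> 0)"
    using assms by (auto split: if_splits)
  then show ?thesis using that by blast
qed

lemma qshuffle_nonzero_letters:
  "qshuffle lam v u w \<noteq> 0 \<Longrightarrow> set w \<subseteq> merged_letters v u \<and> length w \<le> length v + length u"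
proof (induction w arbitrary: v u)
  case Nil
  then show ?case by simp
next
  case (Cons z w)
  from Cons.prems show ?case
  proof (cases rule: qshuffle_Cons_nonzeroE)
    case left
    with Cons.IH[of "tl v" u] merged_letters_mono[OF set_tl_subset[of v], of u u]
    have "set w \<subseteq> merged_letters v u" "length w \<le> length (tl v) + length u" by auto
    moreover have "z \<in> merged_letters v u" using left unfolding merged_letters_def
      by (auto intro!: image_eqI[where x = "(hd v, {#})"])
    ultimately show ?thesis using left by (cases v) auto
  next
    case right
    with Cons.IH[of v "tl u"] merged_letters_mono[OF _ set_tl_subset[of u], of v v]
    have "set w \<subseteq> merged_letters v u" "length w \<le> length v + length (tl u)" by auto
    moreover have "z \<in> merged_letters v u" using right unfolding merged_letters_def
      by (auto intro!: image_eqI[where x = "({#}, hd u)"])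
    ultimately show ?thesis using right by (cases u) auto
  next
    case merge
    with Cons.IH[of "tl v" "tl u"] merged_letters_mono[OF set_tl_subset[of v] set_tl_subset[of u]]
    have "set w \<subseteq> merged_letters v u" "length w \<le> length (tl v) + length (tl u)" by auto
    moreover have "z \<in> merged_letters v u" using merge unfolding merged_letters_def
      by (auto intro!: image_eqI[where x = "(hd v, hd u)"])
    ultimately show ?thesis using merge by (cases u; cases v) auto
  qed
qed

lemma fin_supp_qshuffle [simp]: "fin_supp (qshuffle lam v u)"
proof (rule finite_subset)
  show "supp (qshuffle lam v u)
      \<subseteq> {w. set w \<subseteq> merged_letters v u \<and> length w \<le> length v + length u}"
    by (auto simp: supp_def dest: qshuffle_nonzero_letters)
  show "finite {w. set w \<subseteq> merged_letters v u \<and> length w \<le> length v + length u}"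
    by (rule finite_lists_length_le) (simp add: merged_letters_def)
qed

lemma sum_list_qshuffle:
  "qshuffle lam v u w \<noteq> 0 \<Longrightarrow> sum_list w = sum_list v + sum_list u"
proof (induction w arbitrary: v u)
  case Nil
  then show ?case by (simp split: if_splits)
next
  case (Cons z w)
  from Cons.prems show ?case
  proof (cases rule: qshuffle_Cons_nonzeroE)
    case left
    then show ?thesis using Cons.IH[of "tl v" u] by (cases v) (auto simp: add.assoc)
  next
    case right
    then show ?thesis using Cons.IH[of v "tl u"] by (cases u) (auto simp: add_ac)
  next
    case merge
    then show ?thesis using Cons.IH[of "tl v" "tl u"] by (cases v; cases u) (auto simp: add_ac)
  qed
qed

lemma length_eq_count_steps: "length p = count_list p L + count_list p R + count_list p B"
proof (induction p)
  case (Cons s p)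
  then show ?case by (cases s) auto
qed simp

lemma finite_mix_patterns: "finite (mix_patterns m n)"
proof (rule finite_subset)
  show "mix_patterns m n \<subseteq> {p. set p \<subseteq> {L, R, B} \<and> length p \<le> m + n}"
    by (auto simp: mix_patterns_def length_eq_count_steps) (metis mix_step.exhaust)
  show "finite {p. set p \<subseteq> {L, R, B} \<and> length p \<le> m + n}"
    by (rule finite_lists_length_le) auto
qed

definition patterns_yielding :: "'x word \<Rightarrow> 'x word \<Rightarrow> 'x word \<Rightarrow> mix_step list set" where
  "patterns_yielding xs ys t = {p \<in> mix_patterns (length xs) (length ys). mix p xs ys = t}"

lemma Cons_in_mix_patterns:
  "L # p \<in> mix_patterns m n \<longleftrightarrow> m \<noteq> 0 \<and> p \<in> mix_patterns (m - 1) n"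
  "R # p \<in> mix_patterns m n \<longleftrightarrow> n \<noteq> 0 \<and> p \<in> mix_patterns m (n - 1)"
  "B # p \<in> mix_patterns m n \<longleftrightarrow> m \<noteq> 0 \<and> n \<noteq> 0 \<and> p \<in> mix_patterns (m - 1) (n - 1)"
  by (auto simp: mix_patterns_def)

lemma patterns_yielding_Nil:
  "patterns_yielding xs ys [] = (if xs = [] \<and> ys = [] then {[]} else {})"
proof -
  have "p \<in> patterns_yielding xs ys [] \<longleftrightarrow> p = [] \<and> xs = [] \<and> ys = []" for p
  proof (cases p)
    case Nil
    then show ?thesis by (auto simp: patterns_yielding_def mix_patterns_def)
  next
    case (Cons s p')
    then show ?thesis
      by (cases s; cases xs; cases ys) (auto simp: patterns_yielding_def Cons_in_mix_patterns)
  qed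
  then show ?thesis by auto
qed

lemma Cons_in_patterns_yielding:
  "L # p \<in> patterns_yielding xs ys (z # t)
    \<longleftrightarrow> xs \<noteq> [] \<and> hd xs = z \<and> p \<in> patterns_yielding (tl xs) ys t"
  "R # p \<in> patterns_yielding xs ys (z # t)
    \<longleftrightarrow> ys \<noteq> [] \<and> hd ys = z \<and> p \<in> patterns_yielding xs (tl ys) t"
  "B # p \<in> patterns_yielding xs ys (z # t)
    \<longleftrightarrow> xs \<noteq> [] \<and> ys \<noteq> [] \<and> hd xs + hd ys = z \<and> p \<in> patterns_yielding (tl xs) (tl ys) t"
  by (cases xs; cases ys; auto simp: patterns_yielding_def Cons_in_mix_patterns)+

lemma patterns_yielding_Cons: "patterns_yielding xs ys (z # t) =
    (if xs \<noteq> [] \<and> hd xs = z then Cons L ` patterns_yielding (tl xs) ys t else {})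
  \<union> (if ys \<noteq> [] \<and> hd ys = z then Cons R ` patterns_yielding xs (tl ys) t else {})
  \<union> (if xs \<noteq> [] \<and> ys \<noteq> [] \<and> hd xs + hd ys = z
      then Cons B ` patterns_yielding (tl xs) (tl ys) t else {})" (is "?P = ?Q")
proof -
  have "p \<in> ?P \<longleftrightarrow> p \<in> ?Q" for p
  proof (cases p)
    case (Cons s p')
    then show ?thesis by (cases s) (auto simp: Cons_in_patterns_yielding)
  qed (auto simp: patterns_yielding_def)
  then show ?thesis by blast
qed

lemma sum_patterns_yielding:
  "(\<Sum>p\<in>patterns_yielding xs ys t. lam ^ count_list p B) = qshuffle lam xs ys t"
proof (induction t arbitrary: xs ys)
  case Nil
  then show ?case by (simp add: patterns_yielding_Nil)
next
  case (Cons z t)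
  let ?f = "\<lambda>p. lam ^ count_list p B"
  let ?A1 = "if xs \<noteq> [] \<and> hd xs = z then Cons L ` patterns_yielding (tl xs) ys t else {}"
  let ?A2 = "if ys \<noteq> [] \<and> hd ys = z then Cons R ` patterns_yielding xs (tl ys) t else {}"
  let ?A3 = "if xs \<noteq> [] \<and> ys \<noteq> [] \<and> hd xs + hd ys = z
      then Cons B ` patterns_yielding (tl xs) (tl ys) t else {}"
  have fin: "finite ?A1" "finite ?A2" "finite ?A3"
    by (auto simp: patterns_yielding_def finite_mix_patterns)
  have "sum ?f (patterns_yielding xs ys (z # t)) = sum ?f ?A1 + sum ?f ?A2 + sum ?f ?A3"
    unfolding patterns_yielding_Cons
    by (subst sum.union_disjoint, use fin in auto, subst sum.union_disjoint, use fin in auto)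
  also have "\<dots> = qshuffle lam xs ys (z # t)"
    by (auto simp: sum.reindex Cons.IH[symmetric] sum_distrib_left)
  finally show ?case .
qed

lemma basis_prod_eq_prepend_qshuffle:
  "basis_prod lam u v = prepend (hd u + hd v) (qshuffle lam (tl u) (tl v))"
proof
  fix w
  show "basis_prod lam u v w = prepend (hd u + hd v) (qshuffle lam (tl u) (tl v)) w"
  proof (cases w)
    case Nil
    then show ?thesis by (simp add: basis_prod_def prepend_def)
  next
    case (Cons h t)
    have "{p \<in> mix_patterns (length u - 1) (length v - 1). (hd u + hd v) # mix p (tl u) (tl v) = w}
        = (if h = hd u + hd v then patterns_yielding (tl u) (tl v) t else {})"
      by (auto simp: patterns_yielding_def Cons)
    then show ?thesis
      by (simp add: basis_prod_def prepend_def Cons sum_patterns_yielding)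
  qed
qed

lemma bilinear_ext_prepend_left:
  assumes "fin_supp F"
  shows "bilinear_ext b (prepend x F) G w = (\<Sum>u\<in>supp F. \<Sum>v\<in>supp G. F u * G v * b (x # u) v w)"
proof -
  have "bilinear_ext b (prepend x F) G w
      = (\<Sum>u\<in>Cons x ` supp F. \<Sum>v\<in>supp G. prepend x F u * G v * b u v w)"
    by (simp add: bilinear_ext_def supp_prepend)
  also have "\<dots> = (\<Sum>u\<in>supp F. \<Sum>v\<in>supp G. F u * G v * b (x # u) v w)"
    by (subst sum.reindex) (auto simp: prepend_def)
  finally show ?thesis .
qed

lemma bilinear_ext_prepend_right:
  assumes "fin_supp F"
  shows "bilinear_ext b G (prepend y F) w = (\<Sum>u\<in>supp G. \<Sum>v\<in>supp F. G u * F v * b u (y # v) w)"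
proof -
  have "bilinear_ext b G (prepend y F) w
      = (\<Sum>u\<in>supp G. \<Sum>v\<in>Cons y ` supp F. G u * prepend y F v * b u v w)"
    by (simp add: bilinear_ext_def supp_prepend)
  also have "\<dots> = (\<Sum>u\<in>supp G. \<Sum>v\<in>supp F. G u * F v * b u (y # v) w)"
    by (rule sum.cong[OF refl], subst sum.reindex) (auto simp: prepend_def)
  finally show ?thesis .
qed

lemma bilinear_ext_prepend_prepend:
  assumes "fin_supp F" "fin_supp G"
  shows "bilinear_ext b (prepend x F) (prepend y G) w
    = (\<Sum>u\<in>supp F. \<Sum>v\<in>supp G. F u * G v * b (x # u) (y # v) w)"
proof -
  have "bilinear_ext b (prepend x F) (prepend y G) w
      = (\<Sum>u\<in>supp F. \<Sum>v\<in>Cons y ` supp G. F u * prepend y G v * b (x # u) v w)"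
    using assms by (simp add: bilinear_ext_prepend_left supp_prepend)
  also have "\<dots> = (\<Sum>u\<in>supp F. \<Sum>v\<in>supp G. F u * G v * b (x # u) (y # v) w)"
    by (rule sum.cong[OF refl], subst sum.reindex) (auto simp: prepend_def)
  finally show ?thesis .
qed

lemma fin_supp_bilinear_ext_qshuffle [simp]:
  "fin_supp F \<Longrightarrow> fin_supp G \<Longrightarrow> fin_supp (bilinear_ext (qshuffle lam) F G)"
  by (rule fin_supp_bilinear_ext) auto

lemma bilinear_ext_qshuffle_prepend_prepend:
  assumes "fin_supp F" "fin_supp G"
  shows "bilinear_ext (qshuffle lam) (prepend x F) (prepend y G) = (\<lambda>w.
      prepend x (bilinear_ext (qshuffle lam) F (prepend y G)) w
    + prepend y (bilinear_ext (qshuffle lam) (prepend x F) G) w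
    + lam * prepend (x + y) (bilinear_ext (qshuffle lam) F G) w)"
proof
  fix w
  let ?M = "bilinear_ext (qshuffle lam)"
  have "?M (prepend x F) (prepend y G) w
      = (\<Sum>u\<in>supp F. \<Sum>v\<in>supp G. F u * G v * qshuffle lam (x # u) (y # v) w)"
    by (rule bilinear_ext_prepend_prepend) (use assms in auto)
  also have "\<dots> = (\<Sum>u\<in>supp F. \<Sum>v\<in>supp G. F u * G v * prepend x (qshuffle lam u (y # v)) w)
     + (\<Sum>u\<in>supp F. \<Sum>v\<in>supp G. F u * G v * prepend y (qshuffle lam (x # u) v) w)
     + lam * (\<Sum>u\<in>supp F. \<Sum>v\<in>supp G. F u * G v * prepend (x + y) (qshuffle lam u v) w)"
    by (simp add: qshuffle_Cons_Cons sum.distrib sum_distrib_left algebra_simps)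
  also have "\<dots> = prepend x (?M F (prepend y G)) w + prepend y (?M (prepend x F) G) w
     + lam * prepend (x + y) (?M F G) w"
  proof -
    have right: "?M F (prepend y G) = (\<lambda>w. \<Sum>u\<in>supp F. \<Sum>v\<in>supp G. F u * G v * qshuffle lam u (y # v) w)"
      using assms by (simp add: fun_eq_iff bilinear_ext_prepend_right)
    have left: "?M (prepend x F) G
        = (\<lambda>w. \<Sum>u\<in>supp F. \<Sum>v\<in>supp G. F u * G v * qshuffle lam (x # u) v w)"
      using assms by (simp add: fun_eq_iff bilinear_ext_prepend_left)
    show ?thesis
      unfolding left right bilinear_ext_def[of "qshuffle lam" F G] prepend_sum ..
  qed
  finally show "?M (prepend x F) (prepend y G) w = prepend x (?M F (prepend y G)) w
     + prepend y (?M (prepend x F) G) w + lam * prepend (x + y) (?M F G) w" .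
qed

lemma bilinear_ext_qshuffle_Nil_left:
  assumes "fin_supp g" shows "bilinear_ext (qshuffle lam) (delta []) g = g"
  using assms by (simp add: fun_eq_iff bilinear_ext_delta_left qshuffle_Nil_left sum_supp_delta)

lemma bilinear_ext_qshuffle_Nil_right:
  assumes "fin_supp g" shows "bilinear_ext (qshuffle lam) g (delta []) = g"
  using assms by (simp add: fun_eq_iff bilinear_ext_delta_right qshuffle_Nil_right sum_supp_delta)

lemma qshuffle_prepend_triple_left:
  fixes lam :: "'c::comm_ring_1" and F G H :: "'x word \<Rightarrow> 'c"
  assumes "fin_supp F" "fin_supp G" "fin_supp H"
  defines "M \<equiv> bilinear_ext (qshuffle lam)"
  shows "M (M (prepend x F) (prepend y G)) (prepend z H) = (\<lambda>w.
      prepend x (M (M F (prepend y G)) (prepend z H)) w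
    + prepend z (M (M (prepend x F) (prepend y G)) H) w
    + lam * prepend (x + z) (M (M F (prepend y G)) H) w
    + prepend y (M (M (prepend x F) G) (prepend z H)) w
    + lam * prepend (y + z) (M (M (prepend x F) G) H) w
    + lam * prepend (x + y) (M (M F G) (prepend z H)) w
    + lam * lam * prepend (x + y + z) (M (M F G) H) w)"
  using assms by (simp add: bilinear_ext_qshuffle_prepend_prepend bilinear_ext_add_left
      bilinear_ext_scale_left prepend_add prepend_scale fun_eq_iff algebra_simps)

lemma qshuffle_prepend_triple_right:
  fixes lam :: "'c::comm_ring_1" and F G H :: "'x word \<Rightarrow> 'c"
  assumes "fin_supp F" "fin_supp G" "fin_supp H"
  defines "M \<equiv> bilinear_ext (qshuffle lam)"
  shows "M (prepend x F) (M (prepend y G) (prepend z H)) = (\<lambda>w.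
      prepend x (M F (M (prepend y G) (prepend z H))) w
    + prepend z (M (prepend x F) (M (prepend y G) H)) w
    + lam * prepend (x + z) (M F (M (prepend y G) H)) w
    + prepend y (M (prepend x F) (M G (prepend z H))) w
    + lam * prepend (y + z) (M (prepend x F) (M G H)) w
    + lam * prepend (x + y) (M F (M G (prepend z H))) w
    + lam * lam * prepend (x + y + z) (M F (M G H)) w)"
  using assms by (simp add: bilinear_ext_qshuffle_prepend_prepend bilinear_ext_add_right
      bilinear_ext_scale_right prepend_add prepend_scale fun_eq_iff algebra_simps)

lemma qshuffle_assoc:
  fixes lam :: "'c::comm_ring_1" and a b c :: "'x word"
  shows "bilinear_ext (qshuffle lam) (bilinear_ext (qshuffle lam) (delta a) (delta b)) (delta c)
    = bilinear_ext (qshuffle lam) (delta a) (bilinear_ext (qshuffle lam) (delta b) (delta c))"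
proof (induction "length a + length b + length c" arbitrary: a b c rule: less_induct)
  case less
  let ?M = "bilinear_ext (qshuffle lam)"
  show ?case
  proof (cases "a = [] \<or> b = [] \<or> c = []")
    case True
    then show ?thesis
      by (auto simp: bilinear_ext_qshuffle_Nil_left bilinear_ext_qshuffle_Nil_right)
  next
    case False
    then obtain x U y V z W where abc: "a = x # U" "b = y # V" "c = z # W"
      by (meson list.exhaust)
    have IH: "?M (?M (delta a') (delta b')) (delta c') = ?M (delta a') (?M (delta b') (delta c'))"
      if "length a' + length b' + length c' < length a + length b + length c" for a' b' c' :: "'x word"
      using less that by blast
    have "?M (?M (delta a) (delta b)) (delta c)
        = ?M (?M (prepend x (delta U)) (prepend y (delta V))) (prepend z (delta W))"
      by (simp add: abc prepend_delta)
    also have "\<dots> = ?M (prepend x (delta U)) (?M (prepend y (delta V)) (prepend z (delta W)))"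
      \<comment> \<open>both sides expand into seven terms, matched pairwise by the induction hypothesis\<close>
      unfolding qshuffle_prepend_triple_left[OF fin_supp_delta fin_supp_delta fin_supp_delta]
        qshuffle_prepend_triple_right[OF fin_supp_delta fin_supp_delta fin_supp_delta]
      by (simp add: prepend_delta IH abc)
    also have "\<dots> = ?M (delta a) (?M (delta b) (delta c))"
      by (simp add: abc prepend_delta)
    finally show ?thesis .
  qed
qed

section \<open>The ring structure\<close>

lemma carrier_Sha: "carrier (Sha lam X) = {f. fin_supp f \<and> supp f \<subseteq> sha_basis X}"
  by (simp add: Sha_def)

lemma mult_Sha: "mult (Sha lam X) = bilinear_ext (basis_prod lam)"
  by (simp add: Sha_def bilinear_ext_def[abs_def] supp_def)

lemma one_Sha: "one (Sha lam X) = delta [{#}]"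
  by (simp add: Sha_def delta_def[abs_def])

lemma zero_Sha: "zero (Sha lam X) = (\<lambda>w. 0)"
  by (simp add: Sha_def)

lemma add_Sha: "add (Sha lam X) = (\<lambda>f g w. f w + g w)"
  by (simp add: Sha_def)

lemma fin_supp_basis_prod [simp]: "fin_supp (basis_prod lam u v)"
  by (simp add: basis_prod_eq_prepend_qshuffle)

lemma basis_prod_commute: "basis_prod lam u v = basis_prod lam v u"
proof -
  have "qshuffle lam (tl u) (tl v) = qshuffle lam (tl v) (tl u)"
    by (rule ext) (rule qshuffle_commute)
  then show ?thesis by (simp add: basis_prod_eq_prepend_qshuffle add.commute)
qed

lemma bilinear_ext_basis_prod_prepend:
  assumes "fin_supp P" "fin_supp Q"
  shows "bilinear_ext (basis_prod lam) (prepend x P) (prepend y Q)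
    = prepend (x + y) (bilinear_ext (qshuffle lam) P Q)"
proof
  fix w
  have "bilinear_ext (basis_prod lam) (prepend x P) (prepend y Q) w
      = (\<Sum>u\<in>supp P. \<Sum>v\<in>supp Q. P u * Q v * prepend (x + y) (qshuffle lam u v) w)"
    using assms by (simp add: bilinear_ext_prepend_prepend basis_prod_eq_prepend_qshuffle)
  also have "\<dots> = prepend (x + y) (bilinear_ext (qshuffle lam) P Q) w"
    by (simp add: bilinear_ext_def[of "qshuffle lam"] prepend_sum)
  finally show "bilinear_ext (basis_prod lam) (prepend x P) (prepend y Q) w
      = prepend (x + y) (bilinear_ext (qshuffle lam) P Q) w" .
qed

lemma delta_eq_prepend: "z \<noteq> [] \<Longrightarrow> delta z = prepend (hd z) (delta (tl z))"
  by (cases z) (simp_all add: prepend_delta)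

lemma basis_prod_assoc:
  assumes "u \<noteq> []" "v \<noteq> []" "z \<noteq> []"
  shows "bilinear_ext (basis_prod lam) (basis_prod lam u v) (delta z)
    = bilinear_ext (basis_prod lam) (delta u) (basis_prod lam v z)"
proof -
  have basis_prod_eq: "basis_prod lam u v
      = prepend (hd u + hd v) (bilinear_ext (qshuffle lam) (delta (tl u)) (delta (tl v)))" for u v
    by (simp add: basis_prod_eq_prepend_qshuffle bilinear_ext_delta_delta)
  have "bilinear_ext (basis_prod lam) (basis_prod lam u v) (delta z)
      = prepend (hd u + hd v + hd z)
          (bilinear_ext (qshuffle lam) (bilinear_ext (qshuffle lam) (delta (tl u)) (delta (tl v)))
            (delta (tl z)))"
    by (simp add: basis_prod_eq delta_eq_prepend[OF assms(3)] bilinear_ext_basis_prod_prepend)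
  also have "\<dots> = prepend (hd u + (hd v + hd z))
      (bilinear_ext (qshuffle lam) (delta (tl u))
        (bilinear_ext (qshuffle lam) (delta (tl v)) (delta (tl z))))"
    by (simp add: qshuffle_assoc add.assoc)
  also have "\<dots> = bilinear_ext (basis_prod lam) (delta u) (basis_prod lam v z)"
    by (simp add: basis_prod_eq delta_eq_prepend[OF assms(1)] bilinear_ext_basis_prod_prepend)
  finally show ?thesis .
qed

definition monomials_over :: "'x set \<Rightarrow> 'x multiset set" where
  "monomials_over X = {m. set_mset m \<subseteq> X}"

lemma merged_letters_subset_monomials_over:
  "set v \<subseteq> monomials_over X \<Longrightarrow> set u \<subseteq> monomials_over X \<Longrightarrow> merged_letters v u \<subseteq> monomials_over X"
  unfolding merged_letters_def monomials_over_def by (auto; blast)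

lemma sha_basis_iff: "w \<in> sha_basis X \<longleftrightarrow> w \<noteq> [] \<and> set w \<subseteq> monomials_over X"
  by (auto simp: sha_basis_def monomials_over_def)

lemma supp_basis_prod_subset:
  assumes "u \<in> sha_basis X" "v \<in> sha_basis X"
  shows "supp (basis_prod lam u v) \<subseteq> sha_basis X"
proof
  fix w assume "w \<in> supp (basis_prod lam u v)"
  then obtain t where w: "w = (hd u + hd v) # t" and t: "qshuffle lam (tl u) (tl v) t \<noteq> 0"
    by (auto simp: supp_def basis_prod_eq_prepend_qshuffle prepend_def split: list.splits if_splits)
  have tails: "set (tl u) \<subseteq> monomials_over X" "set (tl v) \<subseteq> monomials_over X"
    and heads: "hd u \<in> monomials_over X" "hd v \<in> monomials_over X"
    using assms by (auto simp: sha_basis_iff dest: set_tl_subset[THEN subsetD])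
  have "set t \<subseteq> monomials_over X"
    using qshuffle_nonzero_letters[OF t] merged_letters_subset_monomials_over[OF tails] by blast
  moreover have "hd u + hd v \<in> monomials_over X"
    using heads by (simp add: monomials_over_def)
  ultimately show "w \<in> sha_basis X" by (simp add: w sha_basis_iff)
qed

lemma Sha_mult_closed:
  assumes "f \<in> carrier (Sha lam X)" "g \<in> carrier (Sha lam X)"
  shows "bilinear_ext (basis_prod lam) f g \<in> carrier (Sha lam X)"
proof -
  have "fin_supp (bilinear_ext (basis_prod lam) f g)"
    using assms by (intro fin_supp_bilinear_ext) (auto simp: carrier_Sha)
  moreover have "supp (bilinear_ext (basis_prod lam) f g) \<subseteq> sha_basis X"
    using supp_bilinear_ext[of "basis_prod lam" f g] supp_basis_prod_subset assms
    by (fastforce simp: carrier_Sha)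
  ultimately show ?thesis by (simp add: carrier_Sha)
qed

lemma Sha_add_closed:
  "f \<in> carrier (Sha lam X) \<Longrightarrow> g \<in> carrier (Sha lam X) \<Longrightarrow> (\<lambda>w. f w + g w) \<in> carrier (Sha lam X)"
  using supp_plus[of f g] by (auto simp: carrier_Sha intro: finite_subset)

lemma Sha_uminus_closed: "f \<in> carrier (Sha lam X) \<Longrightarrow> (\<lambda>w. - f w) \<in> carrier (Sha lam X)"
  by (simp add: carrier_Sha supp_uminus)

lemma Sha_one_closed: "delta [{#}] \<in> carrier (Sha lam X)"
  using supp_delta[of "[{#}]"] by (auto simp: carrier_Sha sha_basis_def intro: finite_subset)

lemma basis_prod_unit_left: "v \<noteq> [] \<Longrightarrow> basis_prod lam [{#}] v = delta v"
  by (cases v) (simp_all add: basis_prod_eq_prepend_qshuffle qshuffle_Nil_left prepend_delta)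

lemma basis_prod_unit_right: "v \<noteq> [] \<Longrightarrow> basis_prod lam v [{#}] = delta v"
  by (cases v) (simp_all add: basis_prod_eq_prepend_qshuffle qshuffle_Nil_right prepend_delta)

lemma Sha_unit_left:
  assumes "f \<in> carrier (Sha lam X)"
  shows "bilinear_ext (basis_prod lam) (delta [{#}]) f = f"
proof
  fix w
  have "supp f \<subseteq> sha_basis X" "fin_supp f" using assms by (auto simp: carrier_Sha)
  then show "bilinear_ext (basis_prod lam) (delta [{#}]) f w = f w"
    by (simp add: bilinear_ext_delta_left basis_prod_unit_left sha_basis_def subset_iff
        sum_supp_delta cong: sum.cong)
qed

lemma Sha_unit_right:
  assumes "f \<in> carrier (Sha lam X)"
  shows "bilinear_ext (basis_prod lam) f (delta [{#}]) = f"
proof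
  fix w
  have "supp f \<subseteq> sha_basis X" "fin_supp f" using assms by (auto simp: carrier_Sha)
  then show "bilinear_ext (basis_prod lam) f (delta [{#}]) w = f w"
    by (simp add: bilinear_ext_delta_right basis_prod_unit_right sha_basis_def subset_iff
        sum_supp_delta cong: sum.cong)
qed

lemma Sha_mult_assoc:
  assumes "f \<in> carrier (Sha lam X)" "g \<in> carrier (Sha lam X)" "h \<in> carrier (Sha lam X)"
  shows "bilinear_ext (basis_prod lam) (bilinear_ext (basis_prod lam) f g) h
    = bilinear_ext (basis_prod lam) f (bilinear_ext (basis_prod lam) g h)"
proof (rule bilinear_ext_assoc)
  have "w \<noteq> []" if "w \<in> supp f \<union> supp g \<union> supp h" for w
    using that assms by (auto simp: carrier_Sha sha_basis_def)
  then show "bilinear_ext (basis_prod lam) (basis_prod lam u v) (delta z)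
      = bilinear_ext (basis_prod lam) (delta u) (basis_prod lam v z)"
    if "u \<in> supp f" "v \<in> supp g" "z \<in> supp h" for u v z
    using that by (intro basis_prod_assoc) auto
qed (use assms in \<open>auto simp: carrier_Sha\<close>)

lemma ring_Sha: "ring (Sha lam X)"
proof (rule ringI)
  show "abelian_group (Sha lam X)"
  proof (rule abelian_groupI)
    show "\<exists>y\<in>carrier (Sha lam X). y \<oplus>\<^bsub>Sha lam X\<^esub> f = \<zero>\<^bsub>Sha lam X\<^esub>"
      if "f \<in> carrier (Sha lam X)" for f
      using that Sha_uminus_closed by (force simp: add_Sha zero_Sha)
    show "\<zero>\<^bsub>Sha lam X\<^esub> \<in> carrier (Sha lam X)"
      by (simp add: zero_Sha carrier_Sha supp_def)
  qed (auto simp: add_Sha zero_Sha add_ac Sha_add_closed)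
  show "monoid (Sha lam X)"
    by (rule monoidI)
       (auto simp: mult_Sha one_Sha Sha_mult_closed Sha_one_closed Sha_mult_assoc
         Sha_unit_left Sha_unit_right)
qed (auto simp: carrier_Sha mult_Sha add_Sha bilinear_ext_add_left bilinear_ext_add_right)

section \<open>Functionals on words and the concatenation product\<close>

definition pairing :: "('x word \<Rightarrow> 'c::comm_ring_1) \<Rightarrow> ('x word \<Rightarrow> 'c) \<Rightarrow> 'c" where
  "pairing F c = (\<Sum>w\<in>supp F. F w * c w)"

definition conc_prod :: "('x word \<Rightarrow> 'c::comm_ring_1) \<Rightarrow> ('x word \<Rightarrow> 'c) \<Rightarrow> 'x word \<Rightarrow> 'c" where
  "conc_prod c d = (\<lambda>w. \<Sum>i\<le>length w. c (take i w) * d (drop i w))"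

lemma pairing_eq_sum: "finite S \<Longrightarrow> supp F \<subseteq> S \<Longrightarrow> pairing F c = (\<Sum>w\<in>S. F w * c w)"
  unfolding pairing_def by (rule sum.mono_neutral_left) (auto simp: supp_def)

lemma pairing_delta_left: "pairing (delta a) c = c a"
  by (subst pairing_eq_sum[where S = "{a}"]) (auto simp: supp_delta, simp add: delta_def)

lemma pairing_delta_right: "fin_supp F \<Longrightarrow> pairing F (delta a) = F a"
  unfolding pairing_def using sum_supp_delta[of F a] by (simp add: delta_def eq_commute)

lemma pairing_add_left:
  assumes "fin_supp F" "fin_supp G"
  shows "pairing (\<lambda>w. F w + G w) c = pairing F c + pairing G c"
proof -
  let ?S = "supp F \<union> supp G"
  have "pairing (\<lambda>w. F w + G w) c = (\<Sum>w\<in>?S. (F w + G w) * c w)"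
    by (rule pairing_eq_sum) (use assms supp_plus in auto)
  also have "\<dots> = (\<Sum>w\<in>?S. F w * c w) + (\<Sum>w\<in>?S. G w * c w)"
    by (simp add: sum.distrib distrib_right)
  also have "\<dots> = pairing F c + pairing G c"
    by (subst (1 2) pairing_eq_sum[where S = ?S]) (use assms in auto)
  finally show ?thesis .
qed

lemma pairing_scale_left:
  assumes "fin_supp F"
  shows "pairing (\<lambda>w. k * F w) c = k * pairing F c"
proof -
  have "pairing (\<lambda>w. k * F w) c = (\<Sum>w\<in>supp F. (k * F w) * c w)"
    by (rule pairing_eq_sum) (use assms supp_scale in auto)
  then show ?thesis
    by (simp add: pairing_def sum_distrib_left mult_ac)
qed

lemma pairing_uminus_left: "pairing (\<lambda>w. - F w) c = - pairing F c"
  by (simp add: pairing_def supp_def sum_negf)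

lemma pairing_prepend: "pairing (prepend x F) c = pairing F (\<lambda>w. c (x # w))"
  unfolding pairing_def supp_prepend by (subst sum.reindex) (auto simp: prepend_def)

lemma pairing_diff_right: "pairing F (\<lambda>w. c w - d w) = pairing F c - pairing F d"
  by (simp add: pairing_def right_diff_distrib sum_subtractf)

lemma pairing_scale_right: "pairing F (\<lambda>w. k * c w) = k * pairing F c"
  by (simp add: pairing_def sum_distrib_left mult_ac)

lemma pairing_eq_0: "(\<And>w. F w \<noteq> 0 \<Longrightarrow> c w = 0) \<Longrightarrow> pairing F c = 0"
  by (simp add: pairing_def supp_def)

lemma pairing_bilinear_ext:
  assumes "fin_supp g" "fin_supp f" "\<And>v u. fin_supp (b v u)"
  shows "pairing (bilinear_ext b g f) c = (\<Sum>v\<in>supp g. \<Sum>u\<in>supp f. g v * f u * pairing (b v u) c)"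
proof -
  define W where "W = (\<Union>v\<in>supp g. \<Union>u\<in>supp f. supp (b v u))"
  have fin_W: "finite W" using assms by (auto simp: W_def)
  have "pairing (bilinear_ext b g f) c = (\<Sum>w\<in>W. bilinear_ext b g f w * c w)"
    by (rule pairing_eq_sum[OF fin_W]) (use supp_bilinear_ext[of b g f] in \<open>simp add: W_def\<close>)
  also have "\<dots> = (\<Sum>v\<in>supp g. \<Sum>u\<in>supp f. \<Sum>w\<in>W. g v * f u * (b v u w * c w))"
    unfolding bilinear_ext_def sum_distrib_right by (subst sum_swap_2_1) (simp add: mult_ac)
  also have "\<dots> = (\<Sum>v\<in>supp g. \<Sum>u\<in>supp f. g v * f u * pairing (b v u) c)"
  proof (intro sum.cong refl)
    fix v u assume "v \<in> supp g" "u \<in> supp f"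
    then have "supp (b v u) \<subseteq> W" by (auto simp: W_def)
    then show "(\<Sum>w\<in>W. g v * f u * (b v u w * c w)) = g v * f u * pairing (b v u) c"
      by (simp add: pairing_eq_sum[OF fin_W] sum_distrib_left)
  qed
  finally show ?thesis .
qed

lemma qshuffle_append:
  "qshuffle lam v u (w1 @ w2) = (\<Sum>i\<le>length v. \<Sum>j\<le>length u.
      qshuffle lam (take i v) (take j u) w1 * qshuffle lam (drop i v) (drop j u) w2)"
proof (induction w1 arbitrary: v u)
  case Nil
  have "qshuffle lam (take i v) (take j u) [] * qshuffle lam (drop i v) (drop j u) w2
      = (if j = 0 then (if i = 0 then qshuffle lam v u w2 else 0) else 0)"
    if "i \<le> length v" "j \<le> length u" for i j
    using that by (cases "i = 0"; cases "j = 0") auto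
  then have "(\<Sum>i\<le>length v. \<Sum>j\<le>length u.
      qshuffle lam (take i v) (take j u) [] * qshuffle lam (drop i v) (drop j u) w2)
     = (\<Sum>i\<le>length v. \<Sum>j\<le>length u. (if j = 0 then (if i = 0 then qshuffle lam v u w2 else 0) else 0))"
    by (intro sum.cong refl) simp
  then show ?case by (simp add: sum.delta)
next
  case (Cons z w1)
  note shift = sum.atMost_Suc_shift length_Cons take_Suc_Cons drop_Suc_Cons take_0 drop_0
  note normalize = sum.distrib sum_distrib_left distrib_right add_ac mult.assoc
  show ?case
  proof (cases v)
    case Nil
    show ?thesis
    proof (cases u)
      case (Cons b u')
      then show ?thesis using \<open>v = []\<close> Cons.IH[of "[]" u']
        by (simp only: shift list.size(3)) (cases "b = z"; simp add: normalize)
    qed (use \<open>v = []\<close> in simp)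
  next
    case (Cons a v')
    show ?thesis
    proof (cases u)
      case Nil
      then show ?thesis using \<open>v = a # v'\<close> Cons.IH[of v' "[]"]
        by (simp only: shift list.size(3)) (cases "a = z"; simp add: normalize)
    next
      case (Cons b u')
      then show ?thesis using \<open>v = a # v'\<close> Cons.IH[of v' u] Cons.IH[of v u'] Cons.IH[of v' u']
        by (simp only: shift) (cases "a = z"; cases "b = z"; cases "a + b = z"; simp add: normalize)
    qed
  qed
qed

lemma inj_on_take_drop: "inj_on (\<lambda>(w, l). (take l w, drop l w)) (Sigma S (\<lambda>w. {..length w}))"
proof (rule inj_onI, clarsimp)
  fix w l w' l'
  assume "l \<le> length w" "l' \<le> length w'" "take l w = take l' w'" "drop l w = drop l' w'"
  then show "w = w' \<and> l = l'"
    by (metis append_take_drop_id length_take min.absorb2)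
qed

lemma pairing_conc_prod:
  assumes "fin_supp F" and "finite U"
    and U: "\<And>w i. F w \<noteq> 0 \<Longrightarrow> i \<le> length w \<Longrightarrow> take i w \<in> U \<and> drop i w \<in> U"
  shows "pairing F (conc_prod c d) = (\<Sum>w1\<in>U. \<Sum>w2\<in>U. F (w1 @ w2) * (c w1 * d w2))"
proof -
  define Sig where "Sig = Sigma (supp F) (\<lambda>w. {..length w})"
  let ?split = "\<lambda>(w, l). (take l w, drop l w)"
  let ?g = "\<lambda>p. F (fst p @ snd p) * (c (fst p) * d (snd p))"
  have "pairing F (conc_prod c d) = (\<Sum>w\<in>supp F. \<Sum>l\<le>length w. F w * (c (take l w) * d (drop l w)))"
    by (simp add: pairing_def conc_prod_def sum_distrib_left)
  also have "\<dots> = (\<Sum>(w, l)\<in>Sig. ?g (?split (w, l)))"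
    unfolding Sig_def by (subst sum.Sigma) (use assms(1) in auto)
  also have "\<dots> = sum ?g (?split ` Sig)"
    by (subst sum.reindex) (auto simp: Sig_def inj_on_take_drop[unfolded split_def] split_def)
  also have "\<dots> = sum ?g (U \<times> U)"
  proof (rule sum.mono_neutral_left)
    show "finite (U \<times> U)" using assms(2) by auto
    show "?split ` Sig \<subseteq> U \<times> U" using U by (auto simp: Sig_def supp_def)
    show "\<forall>p\<in>U \<times> U - ?split ` Sig. ?g p = 0"
    proof
      fix p assume p: "p \<in> U \<times> U - ?split ` Sig"
      show "?g p = 0"
      proof (rule ccontr)
        assume "?g p \<noteq> 0"
        then have "(fst p @ snd p, length (fst p)) \<in> Sig" by (auto simp: Sig_def supp_def)
        then have "?split (fst p @ snd p, length (fst p)) \<in> ?split ` Sig" by blast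
        then show False using p by auto
      qed
    qed
  qed
  also have "\<dots> = (\<Sum>w1\<in>U. \<Sum>w2\<in>U. F (w1 @ w2) * (c w1 * d w2))"
    by (simp add: sum.cartesian_product split_def)
  finally show ?thesis .
qed

lemma pairing_qshuffle_conc_prod:
  "pairing (qshuffle lam v u) (conc_prod c d) = (\<Sum>i\<le>length v. \<Sum>j\<le>length u.
      pairing (qshuffle lam (take i v) (take j u)) c * pairing (qshuffle lam (drop i v) (drop j u)) d)"
proof -
  define U where "U = (\<Union>i\<le>length v. \<Union>j\<le>length u.
      supp (qshuffle lam (take i v) (take j u)) \<union> supp (qshuffle lam (drop i v) (drop j u)))
    \<union> (\<Union>w\<in>supp (qshuffle lam v u). \<Union>l\<le>length w. {take l w, drop l w})"
  have fin_U: "finite U" by (simp add: U_def)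
  have "pairing (qshuffle lam v u) (conc_prod c d)
      = (\<Sum>w1\<in>U. \<Sum>w2\<in>U. qshuffle lam v u (w1 @ w2) * (c w1 * d w2))"
    by (rule pairing_conc_prod[OF fin_supp_qshuffle fin_U]) (auto simp: U_def supp_def)
  also have "\<dots> = (\<Sum>w1\<in>U. \<Sum>w2\<in>U. \<Sum>i\<le>length v. \<Sum>j\<le>length u.
      qshuffle lam (take i v) (take j u) w1 * qshuffle lam (drop i v) (drop j u) w2 * (c w1 * d w2))"
    by (simp only: qshuffle_append sum_distrib_right)
  also have "\<dots> = (\<Sum>i\<le>length v. \<Sum>j\<le>length u. \<Sum>w2\<in>U. \<Sum>w1\<in>U.
      qshuffle lam (take i v) (take j u) w1 * qshuffle lam (drop i v) (drop j u) w2 * (c w1 * d w2))"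
    by (rule sum_swap_2_2)
  also have "\<dots> = (\<Sum>i\<le>length v. \<Sum>j\<le>length u.
      (\<Sum>w1\<in>U. qshuffle lam (take i v) (take j u) w1 * c w1)
      * (\<Sum>w2\<in>U. qshuffle lam (drop i v) (drop j u) w2 * d w2))"
    unfolding sum_product
    by (rule sum.cong[OF refl], rule sum.cong[OF refl], subst sum.swap) (simp add: mult_ac)
  also have "\<dots> = (\<Sum>i\<le>length v. \<Sum>j\<le>length u.
      pairing (qshuffle lam (take i v) (take j u)) c * pairing (qshuffle lam (drop i v) (drop j u)) d)"
  proof (intro sum.cong refl)
    fix i j assume "i \<in> {..length v}" "j \<in> {..length u}"
    then have "supp (qshuffle lam (take i v) (take j u)) \<subseteq> U"
      and "supp (qshuffle lam (drop i v) (drop j u)) \<subseteq> U"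
      unfolding U_def by blast+
    then show "(\<Sum>w1\<in>U. qshuffle lam (take i v) (take j u) w1 * c w1)
        * (\<Sum>w2\<in>U. qshuffle lam (drop i v) (drop j u) w2 * d w2)
      = pairing (qshuffle lam (take i v) (take j u)) c * pairing (qshuffle lam (drop i v) (drop j u)) d"
      by (simp add: pairing_eq_sum[OF fin_U])
  qed
  finally show ?thesis .
qed

lemma pairing_qshuffle_rec:
  "pairing (qshuffle lam v u) c = (if v = [] \<and> u = [] then c [] else 0)
    + (if v \<noteq> [] then pairing (qshuffle lam (tl v) u) (\<lambda>w. c (hd v # w)) else 0)
    + (if u \<noteq> [] then pairing (qshuffle lam v (tl u)) (\<lambda>w. c (hd u # w)) else 0)
    + (if v \<noteq> [] \<and> u \<noteq> []
       then lam * pairing (qshuffle lam (tl v) (tl u)) (\<lambda>w. c ((hd v + hd u) # w)) else 0)"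
proof (cases v)
  case Nil
  then show ?thesis
    by (cases u) (simp_all add: qshuffle_Nil_left pairing_delta_left)
next
  case (Cons a v')
  then show ?thesis
    by (cases u) (simp_all add: qshuffle_Nil_right pairing_delta_left qshuffle_Cons_Cons
        pairing_add_left pairing_scale_left pairing_prepend)
qed

section \<open>Functionals annihilating quasi-shuffles with units\<close>

text \<open>The empty monomial \<open>{#}\<close> is the unit of \<open>C[X]\<close>, so \<open>replicate a {#}\<close> is the word
  \<open>1 \<otimes> \<dots> \<otimes> 1\<close> of length \<open>a\<close>.\<close>

definition kills_units :: "'c::comm_ring_1 \<Rightarrow> ('x word \<Rightarrow> 'c) \<Rightarrow> bool" where
  "kills_units lam c \<longleftrightarrow> (\<forall>a t. 0 < a \<longrightarrow> pairing (qshuffle lam (replicate a {#}) t) c = 0)"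

definition neg_lam_pow :: "'c::comm_ring_1 \<Rightarrow> 'x word \<Rightarrow> 'c" where
  "neg_lam_pow lam w = (if set w \<subseteq> {{#}} then (- lam) ^ length w else 0)"

definition merge_coeff :: "'c::comm_ring_1 \<Rightarrow> nat \<Rightarrow> 'c" where
  "merge_coeff lam n = (if n = 0 then 1 else if n = 1 then lam else 0)"

definition unit_commutator :: "('x word \<Rightarrow> 'c::comm_ring_1) \<Rightarrow> 'x word \<Rightarrow> 'c" where
  "unit_commutator c = (\<lambda>w. conc_prod (delta [{#}]) c w - conc_prod c (delta [{#}]) w)"

lemma neg_lam_pow_Nil [simp]: "neg_lam_pow lam [] = 1"
  by (simp add: neg_lam_pow_def)

lemma neg_lam_pow_Cons: "neg_lam_pow lam (z # w) = (if z = {#} then - lam * neg_lam_pow lam w else 0)"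
  by (auto simp: neg_lam_pow_def)

lemma pairing_qshuffle_units_neg_lam_pow:
  "pairing (qshuffle lam (replicate a {#}) t) (neg_lam_pow lam) = (- lam) ^ a * neg_lam_pow lam t"
proof (induction "a + length t" arbitrary: a t rule: less_induct)
  case less
  show ?case
  proof (cases a)
    case 0
    then show ?thesis by (simp add: qshuffle_Nil_left pairing_delta_left)
  next
    case (Suc a')
    show ?thesis
    proof (cases t)
      case Nil
      then show ?thesis using Suc
        by (simp add: qshuffle_Nil_right pairing_delta_left neg_lam_pow_def set_replicate_conv_if)
    next
      case (Cons y t')
      define k where "k = (if y = {#} then - lam else 0)"
      have y: "neg_lam_pow lam (y # w) = k * neg_lam_pow lam w" for w
        by (simp add: k_def neg_lam_pow_Cons)
      have "pairing (qshuffle lam (replicate a {#}) t) (neg_lam_pow lam)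
          = - lam * pairing (qshuffle lam (replicate a' {#}) t) (neg_lam_pow lam)
          + k * pairing (qshuffle lam (replicate a {#}) t') (neg_lam_pow lam)
          + lam * (k * pairing (qshuffle lam (replicate a' {#}) t') (neg_lam_pow lam))"
        by (subst pairing_qshuffle_rec)
           (simp add: Suc Cons y neg_lam_pow_Cons[of lam "{#}"] pairing_scale_right del: mult_minus_left)
      also have "\<dots> = (- lam) ^ a * neg_lam_pow lam t"
        using less[of a' t] less[of a t'] less[of a' t'] by (simp add: Suc Cons y algebra_simps)
      finally show ?thesis .
    qed
  qed
qed

lemma sum_atMost_eq_first: "(\<And>i. 0 < i \<Longrightarrow> i \<le> n \<Longrightarrow> g i = 0) \<Longrightarrow> (\<Sum>i\<le>(n::nat). g i) = g 0"
  by (induction n) auto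

lemma sum_atMost_eq_last: "(\<And>i. i < n \<Longrightarrow> g i = 0) \<Longrightarrow> (\<Sum>i\<le>(n::nat). g i) = g n"
  by (cases n) (simp_all add: sum.neutral)

lemma sum_splits_short_prefix:
  assumes "\<And>p s. 1 < length p \<Longrightarrow> f p s = 0"
  shows "(\<Sum>i\<le>length t. f (take i t) (drop i t)) = f [] t + (if t = [] then 0 else f [hd t] (tl t))"
proof (cases t)
  case (Cons y t')
  have "(\<Sum>i\<le>length t'. f (y # take i t') (drop i t')) = f [y] t'"
    by (subst sum_atMost_eq_first) (auto intro: assms)
  then show ?thesis using Cons by (simp del: sum.atMost_Suc add: sum.atMost_Suc_shift)
qed simp

lemma sum_splits_short_suffix:
  assumes "\<And>p s. 1 < length s \<Longrightarrow> f p s = 0"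
  shows "(\<Sum>i\<le>length t. f (take i t) (drop i t)) = f t [] + (if t = [] then 0 else f (butlast t) [last t])"
proof (cases t rule: rev_cases)
  case (snoc t' y)
  have "(\<Sum>i\<le>length t'. f (take i (t' @ [y])) (drop i (t' @ [y]))) = f t' [y]"
    by (subst sum_atMost_eq_last) (auto intro: assms)
  then show ?thesis using snoc by (simp add: add.commute)
qed simp

lemma conc_prod_delta_single_left:
  "conc_prod (delta [a]) c t = (if t \<noteq> [] \<and> hd t = a then c (tl t) else 0)"
  unfolding conc_prod_def by (subst sum_splits_short_prefix) (auto simp: delta_def)

lemma conc_prod_delta_single_right:
  "conc_prod c (delta [a]) t = (if t \<noteq> [] \<and> last t = a then c (butlast t) else 0)"
  unfolding conc_prod_def by (subst sum_splits_short_suffix) (auto simp: delta_def)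

lemma qshuffle_units_single:
  "qshuffle lam (replicate i {#}) u [z]
    = (if i = 1 \<and> u = [] \<and> z = {#} then 1 else 0) + (if u = [z] then merge_coeff lam i else 0)"
  by (cases i; cases u) (auto simp: merge_coeff_def le_Suc_eq)

lemma pairing_kills_units:
  "kills_units lam c \<Longrightarrow> pairing (qshuffle lam (replicate a {#}) t) c = (if a = 0 then c t else 0)"
  by (auto simp: kills_units_def qshuffle_Nil_left pairing_delta_left)

lemma pairing_units_conc_prod_left:
  assumes "kills_units lam c"
  shows "pairing (qshuffle lam (replicate i {#}) t) (conc_prod e c)
    = (\<Sum>j\<le>length t. pairing (qshuffle lam (replicate i {#}) (take j t)) e * c (drop j t))"
proof -
  have "pairing (qshuffle lam (replicate i {#}) t) (conc_prod e c) = (\<Sum>i1\<le>i. \<Sum>j\<le>length t.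
      pairing (qshuffle lam (replicate (min i1 i) {#}) (take j t)) e
      * pairing (qshuffle lam (replicate (i - i1) {#}) (drop j t)) c)"
    by (simp add: pairing_qshuffle_conc_prod)
  also have "\<dots> = (\<Sum>j\<le>length t. pairing (qshuffle lam (replicate i {#}) (take j t)) e
      * pairing (qshuffle lam [] (drop j t)) c)"
    by (subst sum_atMost_eq_last) (simp_all add: pairing_kills_units[OF assms])
  finally show ?thesis by (simp add: qshuffle_Nil_left pairing_delta_left)
qed

lemma pairing_units_conc_prod_right:
  assumes "kills_units lam c"
  shows "pairing (qshuffle lam (replicate i {#}) t) (conc_prod c e)
    = (\<Sum>j\<le>length t. c (take j t) * pairing (qshuffle lam (replicate i {#}) (drop j t)) e)"
proof -
  have "pairing (qshuffle lam (replicate i {#}) t) (conc_prod c e) = (\<Sum>i1\<le>i. \<Sum>j\<le>length t.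
      pairing (qshuffle lam (replicate (min i1 i) {#}) (take j t)) c
      * pairing (qshuffle lam (replicate (i - i1) {#}) (drop j t)) e)"
    by (simp add: pairing_qshuffle_conc_prod)
  also have "\<dots> = (\<Sum>j\<le>length t. pairing (qshuffle lam [] (take j t)) c
      * pairing (qshuffle lam (replicate i {#}) (drop j t)) e)"
    by (subst sum_atMost_eq_first) (simp_all add: pairing_kills_units[OF assms])
  finally show ?thesis by (simp add: qshuffle_Nil_left pairing_delta_left)
qed

lemma pairing_units_unit_commutator:
  assumes "kills_units lam c"
  shows "pairing (qshuffle lam (replicate i {#}) t) (unit_commutator c) = merge_coeff lam i * unit_commutator c t"
proof -
  have pairing_single: "pairing (qshuffle lam (replicate i {#}) p) (delta [{#}])
      = qshuffle lam (replicate i {#}) p [{#}]" for p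
    by (simp add: pairing_delta_right)
  have left: "pairing (qshuffle lam (replicate i {#}) t) (conc_prod (delta [{#}]) c)
      = (if i = 1 then c t else 0) + (if t \<noteq> [] \<and> hd t = {#} then merge_coeff lam i * c (tl t) else 0)"
    unfolding pairing_units_conc_prod_left[OF assms] pairing_single
    by (subst sum_splits_short_prefix) (auto simp: qshuffle_units_single merge_coeff_def simp del: qshuffle.simps)
  have right: "pairing (qshuffle lam (replicate i {#}) t) (conc_prod c (delta [{#}]))
      = (if i = 1 then c t else 0) + (if t \<noteq> [] \<and> last t = {#} then merge_coeff lam i * c (butlast t) else 0)"
    unfolding pairing_units_conc_prod_right[OF assms] pairing_single
    by (subst sum_splits_short_suffix) (auto simp: qshuffle_units_single merge_coeff_def simp del: qshuffle.simps)
  \<comment> \<open>the terms \<open>c t\<close> for \<open>i = 1\<close> cancel in the commutator\<close>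
  show ?thesis
    unfolding unit_commutator_def pairing_diff_right left right
    by (simp add: conc_prod_delta_single_left conc_prod_delta_single_right algebra_simps)
qed

text \<open>The coefficients of \<open>(1 + lam X) * (1 + lam X)\<^sup>-\<^sup>1 = 1\<close>.\<close>

lemma sum_neg_lam_pow_merge_coeff:
  assumes "0 < k" shows "(\<Sum>i\<le>k. (- lam) ^ i * merge_coeff lam (k - i)) = 0"
proof -
  obtain m where k: "k = Suc m" using assms by (cases k) auto
  have "(\<Sum>i\<le>m. (- lam) ^ i * merge_coeff lam (k - i)) = (- lam) ^ m * lam"
    by (subst sum_atMost_eq_last) (auto simp: k merge_coeff_def)
  then show ?thesis by (simp add: k merge_coeff_def)
qed

lemma sum_merge_coeff_neg_lam_pow:
  assumes "0 < k" shows "(\<Sum>i\<le>k. merge_coeff lam i * (- lam) ^ (k - i)) = 0"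
proof -
  obtain m where k: "k = Suc m" using assms by (cases k) auto
  have "(\<Sum>i\<le>m. merge_coeff lam (Suc i) * (- lam) ^ (k - Suc i)) = lam * (- lam) ^ m"
    by (subst sum_atMost_eq_first) (auto simp: k merge_coeff_def)
  then show ?thesis by (simp add: k merge_coeff_def sum.atMost_Suc_shift del: sum.atMost_Suc)
qed

lemma pairing_units_delta_single:
  "x \<noteq> {#} \<Longrightarrow> pairing (qshuffle lam (replicate i {#}) s) (delta [x]) = merge_coeff lam i * delta [x] s"
  by (simp add: pairing_delta_right qshuffle_units_single del: qshuffle.simps) (simp add: delta_def)

lemma kills_units_conc_prod:
  assumes "\<And>i s. pairing (qshuffle lam (replicate i {#}) s) c = \<alpha> i * c s"
    and "\<And>i s. pairing (qshuffle lam (replicate i {#}) s) d = \<beta> i * d s"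
    and "\<And>a. 0 < a \<Longrightarrow> (\<Sum>i\<le>a. \<alpha> i * \<beta> (a - i)) = 0"
  shows "kills_units lam (conc_prod c d)"
  unfolding kills_units_def
proof (intro allI impI)
  fix a t assume "0 < (a::nat)"
  have "pairing (qshuffle lam (replicate a {#}) t) (conc_prod c d)
      = (\<Sum>i\<le>a. \<Sum>j\<le>length t. \<alpha> i * \<beta> (a - i) * (c (take j t) * d (drop j t)))"
    unfolding pairing_qshuffle_conc_prod
    by (intro sum.cong refl) (simp_all add: assms(1,2) min_def mult_ac)
  also have "\<dots> = (\<Sum>i\<le>a. \<alpha> i * \<beta> (a - i)) * conc_prod c d t"
    by (simp add: conc_prod_def sum_product)
  finally show "pairing (qshuffle lam (replicate a {#}) t) (conc_prod c d) = 0"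
    by (simp add: assms(3)[OF \<open>0 < a\<close>])
qed

primrec tail_functional :: "'c::comm_ring_1 \<Rightarrow> 'x multiset \<Rightarrow> nat \<Rightarrow> 'x word \<Rightarrow> 'c" where
  "tail_functional lam x 0 = conc_prod (neg_lam_pow lam) (delta [x])"
| "tail_functional lam x (Suc m) = conc_prod (unit_commutator (tail_functional lam x m)) (neg_lam_pow lam)"

lemma kills_units_tail_functional:
  assumes "x \<noteq> {#}" shows "kills_units lam (tail_functional lam x m)"
proof (induction m)
  case 0
  show ?case
    by (simp add: kills_units_conc_prod pairing_qshuffle_units_neg_lam_pow
        pairing_units_delta_single[OF assms] sum_neg_lam_pow_merge_coeff)
next
  case (Suc m)
  then show ?case
    by (simp add: kills_units_conc_prod pairing_qshuffle_units_neg_lam_pow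
        pairing_units_unit_commutator sum_merge_coeff_neg_lam_pow)
qed

lemma conc_prod_nonzero:
  "conc_prod c d w \<noteq> 0 \<Longrightarrow> \<exists>i\<le>length w. c (take i w) \<noteq> 0 \<and> d (drop i w) \<noteq> 0"
  unfolding conc_prod_def by (metis (no_types, lifting) atMost_iff mult_not_zero sum.neutral)

lemma sum_list_take_drop: "sum_list (take i w) + sum_list (drop i w) = (sum_list w :: 'x multiset)"
  by (metis append_take_drop_id sum_list_append)

lemma sum_list_eq_empty_iff: "sum_list w = ({#} :: 'x multiset) \<longleftrightarrow> set w \<subseteq> {{#}}"
  by (induction w) auto

lemma neg_lam_pow_nonzero: "neg_lam_pow lam w \<noteq> 0 \<Longrightarrow> sum_list w = {#}"
  by (auto simp: neg_lam_pow_def sum_list_eq_empty_iff split: if_splits)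

lemma unit_commutator_nonzero:
  assumes "unit_commutator c p \<noteq> 0"
    and c: "\<And>w. c w \<noteq> 0 \<Longrightarrow> sum_list w = x \<and> Suc m \<le> length w"
  shows "sum_list p = x \<and> Suc (Suc m) \<le> length p"
proof -
  from assms(1) consider "conc_prod (delta [{#}]) c p \<noteq> 0" | "conc_prod c (delta [{#}]) p \<noteq> 0"
    by (force simp: unit_commutator_def)
  then show ?thesis
  proof cases
    case 1
    then have "p \<noteq> []" "hd p = {#}" "c (tl p) \<noteq> 0"
      by (auto simp: conc_prod_delta_single_left split: if_splits)
    then show ?thesis using c[of "tl p"] by (cases p) auto
  next
    case 2
    then have p: "p \<noteq> []" "last p = {#}" "c (butlast p) \<noteq> 0"
      by (auto simp: conc_prod_delta_single_right split: if_splits)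
    then have "sum_list p = sum_list (butlast p)"
      by (metis append_butlast_last_id sum_list_append sum_list_simps add.right_neutral)
    then show ?thesis using p c[of "butlast p"] by auto
  qed
qed

lemma tail_functional_nonzero:
  fixes lam :: "'c::comm_ring_1"
  shows "tail_functional lam x m w \<noteq> 0 \<Longrightarrow> sum_list w = x \<and> Suc m \<le> length w"
proof (induction m arbitrary: w)
  case 0
  then obtain i where i: "neg_lam_pow lam (take i w) \<noteq> 0" "delta [x] (drop i w) \<noteq> (0::'c)"
    using conc_prod_nonzero by fastforce
  then have "drop i w = [x]" by (auto simp: delta_def split: if_splits)
  then show ?case
    using neg_lam_pow_nonzero[OF i(1)] sum_list_take_drop[of i w] by (auto dest: arg_cong[of _ _ length])
next
  case (Suc m)
  then obtain i where i: "unit_commutator (tail_functional lam x m) (take i w) \<noteq> 0"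
    "neg_lam_pow lam (drop i w) \<noteq> 0"
    using conc_prod_nonzero by fastforce
  have "sum_list (take i w) = x \<and> Suc (Suc m) \<le> length (take i w)"
    by (rule unit_commutator_nonzero[OF i(1)]) (rule Suc.IH)
  then show ?case
    using neg_lam_pow_nonzero[OF i(2)] sum_list_take_drop[of i w] by auto
qed

lemma tail_functional_value:
  fixes lam :: "'c::comm_ring_1"
  assumes "x \<noteq> {#}"
  shows "tail_functional lam x m (x # replicate m {#}) = (- 1) ^ m"
proof (induction m)
  case 0
  show ?case using assms by (simp add: conc_prod_def delta_def neg_lam_pow_def)
next
  case (Suc m)
  let ?w = "x # replicate (Suc m) {#}"
  have short: "unit_commutator (tail_functional lam x m) p = 0" if "length p < Suc (Suc m)" for p
    using that unit_commutator_nonzero[of "tail_functional lam x m" p x m] tail_functional_nonzero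
    by fastforce
  have "tail_functional lam x (Suc m) ?w
      = (\<Sum>i\<le>length ?w. unit_commutator (tail_functional lam x m) (take i ?w) * neg_lam_pow lam (drop i ?w))"
    by (simp add: conc_prod_def)
  also have "\<dots> = unit_commutator (tail_functional lam x m) ?w"
    by (subst sum_atMost_eq_last) (simp_all add: short)
  also have "\<dots> = - tail_functional lam x m (x # replicate m {#})"
    using assms by (simp add: unit_commutator_def conc_prod_delta_single_left conc_prod_delta_single_right
        butlast_append flip: replicate_append_same)
  also have "\<dots> = (- 1) ^ Suc m" using Suc by simp
  finally show ?case .
qed

section \<open>The tail ideal is not finitely generated\<close>

definition tail_ideal :: "'c::comm_ring_1 \<Rightarrow> 'x set \<Rightarrow> ('x word \<Rightarrow> 'c) set" where
  "tail_ideal lam X = {f \<in> carrier (Sha lam X). \<forall>w\<in>supp f. sum_list (tl w) \<noteq> {#}}"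

definition psi :: "'c::comm_ring_1 \<Rightarrow> 'x multiset \<Rightarrow> nat \<Rightarrow> 'x word \<Rightarrow> 'c" where
  "psi lam x m w = (if w \<noteq> [] \<and> hd w = {#} then tail_functional lam x m (tl w) else 0)"

lemma psi_short:
  assumes "length w \<le> Suc m" shows "psi lam x m w = 0"
proof (rule ccontr)
  assume "psi lam x m w \<noteq> 0"
  then have "tail_functional lam x m (tl w) \<noteq> 0" by (simp add: psi_def split: if_splits)
  then show False using tail_functional_nonzero assms by fastforce
qed

lemma pairing_qshuffle_tail_functional:
  fixes x :: "'x multiset"
  assumes "size x = 1" and "sum_list u \<noteq> {#}"
  shows "pairing (qshuffle lam v u) (tail_functional lam x m)
    = (if v = [] then tail_functional lam x m u else 0)"
proof (cases "sum_list v = {#}")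
  case True
  then have "replicate (length v) {#} = v"
    by (intro replicate_length_same) (auto simp: sum_list_eq_empty_iff)
  moreover have "x \<noteq> {#}" using assms(1) by auto
  ultimately show ?thesis
    using pairing_kills_units[OF kills_units_tail_functional[of x lam m], where a = "length v" and t = u]
    by auto
next
  case False
  have "tail_functional lam x m w = 0" if "qshuffle lam v u w \<noteq> 0" for w
  proof -
    have "sum_list w = sum_list v + sum_list u" using that by (rule sum_list_qshuffle)
    then have "2 \<le> size (sum_list w)"
      using False assms(2) by (simp add: Suc_leI nonempty_has_size)
    then show ?thesis using tail_functional_nonzero assms(1) by fastforce
  qed
  then show ?thesis using False by (auto intro: pairing_eq_0)
qed

lemma pairing_basis_prod_psi:
  fixes lam :: "'c::comm_ring_1" and x :: "'x multiset"
  assumes "size x = 1" and "v \<noteq> []" "u \<noteq> []" "sum_list (tl u) \<noteq> {#}"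
  shows "pairing (basis_prod lam v u) (psi lam x m) = (if v = [{#}] then psi lam x m u else 0)"
proof -
  have pairing_eq: "pairing (basis_prod lam v u) (psi lam x m) = pairing (qshuffle lam (tl v) (tl u))
      (\<lambda>w. if hd v + hd u = {#} then tail_functional lam x m w else 0)"
    by (simp add: basis_prod_eq_prepend_qshuffle pairing_prepend psi_def cong: if_cong)
  show ?thesis
  proof (cases "hd v + hd u = {#}")
    case True
    then show ?thesis
      unfolding pairing_eq using assms
      by (cases v) (auto simp: pairing_qshuffle_tail_functional psi_def)
  next
    case False
    then have "(\<lambda>w. if hd v + hd u = {#} then tail_functional lam x m w else 0) = (\<lambda>w. 0)"
      by auto
    then have "pairing (basis_prod lam v u) (psi lam x m) = 0"
      unfolding pairing_eq by (simp add: pairing_def)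
    moreover have "v = [{#}] \<Longrightarrow> psi lam x m u = 0" using False by (simp add: psi_def)
    ultimately show ?thesis by simp
  qed
qed

lemma pairing_psi_mult:
  fixes lam :: "'c::comm_ring_1" and x :: "'x multiset"
  assumes x: "size x = 1" and f: "f \<in> tail_ideal lam X" and g: "g \<in> carrier (Sha lam X)"
  shows "pairing (bilinear_ext (basis_prod lam) g f) (psi lam x m) = g [{#}] * pairing f (psi lam x m)"
proof -
  have fin: "fin_supp f" "fin_supp g" using f g by (auto simp: carrier_Sha tail_ideal_def)
  have "pairing (bilinear_ext (basis_prod lam) g f) (psi lam x m)
      = (\<Sum>v\<in>supp g. \<Sum>u\<in>supp f. g v * f u * pairing (basis_prod lam v u) (psi lam x m))"
    using fin by (simp add: pairing_bilinear_ext)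
  also have "\<dots> = (\<Sum>v\<in>supp g. \<Sum>u\<in>supp f. g v * f u * (if v = [{#}] then psi lam x m u else 0))"
  proof (intro sum.cong refl)
    fix v u assume "v \<in> supp g" "u \<in> supp f"
    then have "v \<noteq> []" "u \<noteq> []" "sum_list (tl u) \<noteq> {#}"
      using f g by (auto simp: carrier_Sha sha_basis_def tail_ideal_def)
    then show "g v * f u * pairing (basis_prod lam v u) (psi lam x m)
        = g v * f u * (if v = [{#}] then psi lam x m u else 0)"
      by (simp add: pairing_basis_prod_psi[OF x])
  qed
  also have "\<dots> = (\<Sum>v\<in>supp g. if v = [{#}] then g v * pairing f (psi lam x m) else 0)"
    by (intro sum.cong refl) (simp add: pairing_def sum_distrib_left mult_ac)
  also have "\<dots> = g [{#}] * pairing f (psi lam x m)"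
    using fin by (simp add: sum.delta) (auto simp: supp_def)
  finally show ?thesis .
qed

lemma ideal_Sha_intro:
  assumes "P \<subseteq> carrier (Sha lam X)" "(\<lambda>w. 0) \<in> P"
    and add: "\<And>f g. f \<in> P \<Longrightarrow> g \<in> P \<Longrightarrow> (\<lambda>w. f w + g w) \<in> P"
    and uminus: "\<And>f. f \<in> P \<Longrightarrow> (\<lambda>w. - f w) \<in> P"
    and mult: "\<And>f g. f \<in> P \<Longrightarrow> g \<in> carrier (Sha lam X) \<Longrightarrow> bilinear_ext (basis_prod lam) g f \<in> P"
  shows "ideal P (Sha lam X)"
proof -
  interpret R: ring "Sha lam X" by (rule ring_Sha)
  have a_inv: "\<ominus>\<^bsub>Sha lam X\<^esub> f = (\<lambda>w. - f w)" if "f \<in> carrier (Sha lam X)" for f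
    by (rule R.minus_equality) (use that Sha_uminus_closed in \<open>auto simp: add_Sha zero_Sha\<close>)
  show ?thesis
  proof (rule idealI[OF ring_Sha])
    show "subgroup P (add_monoid (Sha lam X))"
      by (rule R.add.subgroupI) (use assms a_inv in \<open>auto simp: add_Sha\<close>)
    show "x \<otimes>\<^bsub>Sha lam X\<^esub> a \<in> P" if "a \<in> P" "x \<in> carrier (Sha lam X)" for a x
      using that mult by (simp add: mult_Sha)
    show "a \<otimes>\<^bsub>Sha lam X\<^esub> x \<in> P" if "a \<in> P" "x \<in> carrier (Sha lam X)" for a x
      using that mult bilinear_ext_commute[of "basis_prod lam" a x, OF basis_prod_commute]
      by (simp add: mult_Sha)
  qed
qed

lemma tail_ideal_mult_closed:
  assumes f: "f \<in> tail_ideal lam X" and g: "g \<in> carrier (Sha lam X)"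
  shows "bilinear_ext (basis_prod lam) g f \<in> tail_ideal lam X"
proof -
  have "sum_list (tl w) \<noteq> {#}" if w_supp: "w \<in> supp (bilinear_ext (basis_prod lam) g f)" for w
  proof -
    obtain v u where u: "u \<in> supp f" and w: "w \<in> supp (basis_prod lam v u)"
      using supp_bilinear_ext[of "basis_prod lam" g f] w_supp by blast
    from w obtain t where t: "w = (hd v + hd u) # t" "qshuffle lam (tl v) (tl u) t \<noteq> 0"
      by (auto simp: supp_def basis_prod_eq_prepend_qshuffle prepend_def split: list.splits if_splits)
    have "sum_list t = sum_list (tl v) + sum_list (tl u)" by (rule sum_list_qshuffle[OF t(2)])
    moreover have "sum_list (tl u) \<noteq> {#}" using u f by (auto simp: tail_ideal_def)
    ultimately show ?thesis using t(1) by simp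
  qed
  moreover have "bilinear_ext (basis_prod lam) g f \<in> carrier (Sha lam X)"
    using f g Sha_mult_closed by (auto simp: tail_ideal_def)
  ultimately show ?thesis by (simp add: tail_ideal_def)
qed

lemma tail_ideal_add_closed:
  "f \<in> tail_ideal lam X \<Longrightarrow> g \<in> tail_ideal lam X \<Longrightarrow> (\<lambda>w. f w + g w) \<in> tail_ideal lam X"
  using Sha_add_closed[of f lam X g] supp_plus[of f g] by (auto simp: tail_ideal_def)

lemma tail_ideal_uminus_closed: "f \<in> tail_ideal lam X \<Longrightarrow> (\<lambda>w. - f w) \<in> tail_ideal lam X"
  by (simp add: tail_ideal_def supp_uminus Sha_uminus_closed)

lemma zero_in_tail_ideal: "(\<lambda>w. 0) \<in> tail_ideal lam X"
  by (simp add: tail_ideal_def carrier_Sha supp_def)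

lemma tail_ideal_subset: "tail_ideal lam X \<subseteq> carrier (Sha lam X)"
  by (auto simp: tail_ideal_def)

lemma ideal_tail_ideal: "ideal (tail_ideal lam X) (Sha lam X)"
  by (rule ideal_Sha_intro) (simp_all add: tail_ideal_subset zero_in_tail_ideal tail_ideal_add_closed
      tail_ideal_uminus_closed tail_ideal_mult_closed)

lemma ideal_psi_kernel:
  fixes x :: "'x multiset"
  assumes "size x = 1"
  shows "ideal {f \<in> tail_ideal lam X. pairing f (psi lam x m) = 0} (Sha lam X)"
proof (rule ideal_Sha_intro)
  show "{f \<in> tail_ideal lam X. pairing f (psi lam x m) = 0} \<subseteq> carrier (Sha lam X)"
    using tail_ideal_subset by blast
  show "(\<lambda>w. 0) \<in> {f \<in> tail_ideal lam X. pairing f (psi lam x m) = 0}"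
    by (simp add: zero_in_tail_ideal pairing_def supp_def)
  fix f assume f: "f \<in> {f \<in> tail_ideal lam X. pairing f (psi lam x m) = 0}"
  then have fin_f: "fin_supp f" using tail_ideal_subset by (auto simp: carrier_Sha)
  show "(\<lambda>w. - f w) \<in> {f \<in> tail_ideal lam X. pairing f (psi lam x m) = 0}"
    using f by (simp add: tail_ideal_uminus_closed pairing_uminus_left)
  show "(\<lambda>w. f w + g w) \<in> {f \<in> tail_ideal lam X. pairing f (psi lam x m) = 0}"
    if "g \<in> {f \<in> tail_ideal lam X. pairing f (psi lam x m) = 0}" for g
  proof -
    have "fin_supp g" using that tail_ideal_subset by (auto simp: carrier_Sha)
    then show ?thesis using f that fin_f by (simp add: tail_ideal_add_closed pairing_add_left)
  qed
  show "bilinear_ext (basis_prod lam) g f \<in> {f \<in> tail_ideal lam X. pairing f (psi lam x m) = 0}"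
    if "g \<in> carrier (Sha lam X)" for g
    using f that pairing_psi_mult[OF assms, of f lam X g] tail_ideal_mult_closed[of f lam X g] by simp
qed

lemma pairing_psi_witness:
  assumes "x \<noteq> {#}"
  shows "pairing (delta ({#} # x # replicate m {#})) (psi lam x m) = (- 1) ^ m"
  by (simp add: pairing_delta_left psi_def tail_functional_value[OF assms])

lemma delta_witness_in_tail_ideal:
  assumes "x0 \<in> X"
  shows "delta ({#} # {#x0#} # replicate m {#}) \<in> tail_ideal lam X"
proof -
  have "{#} # {#x0#} # replicate m {#} \<in> sha_basis X"
    using assms by (auto simp: sha_basis_def)
  then show ?thesis
    using supp_delta[of "{#} # {#x0#} # replicate m {#}"]
    by (auto simp: tail_ideal_def carrier_Sha sum_list_replicate intro: finite_subset)
qed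

lemma tail_ideal_not_finitely_generated:
  fixes lam :: "'c::comm_ring_1"
  assumes "(1::'c) \<noteq> 0" and "X \<noteq> {}"
    and A: "A \<subseteq> carrier (Sha lam X)" "finite A"
  shows "tail_ideal lam X \<noteq> genideal (Sha lam X) A"
proof
  assume gen: "tail_ideal lam X = genideal (Sha lam X) A"
  interpret R: ring "Sha lam X" by (rule ring_Sha)
  obtain x0 where "x0 \<in> X" using assms(2) by blast
  define x where "x = {#x0#}"
  obtain m where m: "\<And>a w. a \<in> A \<Longrightarrow> a w \<noteq> 0 \<Longrightarrow> length w \<le> m"
  proof -
    have "finite (length ` (\<Union>a\<in>A. supp a))" using A by (auto simp: carrier_Sha)
    then obtain m where "\<forall>n\<in>length ` (\<Union>a\<in>A. supp a). n \<le> m"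
      using finite_nat_set_iff_bounded_le by blast
    then have "\<And>a w. a \<in> A \<Longrightarrow> a w \<noteq> 0 \<Longrightarrow> length w \<le> m" by (auto simp: supp_def)
    then show thesis by (rule that)
  qed
  let ?K = "{f \<in> tail_ideal lam X. pairing f (psi lam x m) = 0}"
  have "A \<subseteq> ?K"
  proof
    fix a assume "a \<in> A"
    then have "a \<in> tail_ideal lam X" using R.genideal_self[OF A(1)] gen by blast
    moreover have "pairing a (psi lam x m) = 0"
      using m[OF \<open>a \<in> A\<close>] by (intro pairing_eq_0 psi_short) (simp add: le_SucI)
    ultimately show "a \<in> ?K" by simp
  qed
  then have "tail_ideal lam X \<subseteq> ?K"
    using R.genideal_minimal[OF ideal_psi_kernel] gen by (simp add: x_def)
  then have "pairing (delta ({#} # x # replicate m {#})) (psi lam x m) = 0"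
    using delta_witness_in_tail_ideal[OF \<open>x0 \<in> X\<close>] by (auto simp: x_def)
  moreover have "(- 1 :: 'c) ^ m \<noteq> 0" using assms(1) by (simp add: minus_one_power_iff)
  ultimately show False by (simp add: pairing_psi_witness x_def)
qed

lemma not_noetherian_Sha:
  fixes lam :: "'c::comm_ring_1"
  assumes "(1::'c) \<noteq> 0" and "X \<noteq> {}"
  shows "\<not> noetherian_ring (Sha lam X)"
  using noetherian_ring.finetely_gen[OF _ ideal_tail_ideal] tail_ideal_not_finitely_generated[OF assms]
  by blast

theorem theorem3p3:
  fixes lam :: "'c::comm_ring_1" and X :: "'x set"
  assumes "CHAR('c) = 0" and "X \<noteq> {}"
  shows "ring (Sha lam X) \<and> \<not> noetherian_ring (Sha lam X)"
proof
  show "ring (Sha lam X)" by (rule ring_Sha)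
  have "(1::'c) \<noteq> 0"
  proof
    assume "(1::'c) = 0"
    then have "CHAR('c) dvd 1" using of_nat_eq_0_iff_char_dvd[of 1] by simp
    with assms(1) show False by simp
  qed
  then show "\<not> noetherian_ring (Sha lam X)" by (rule not_noetherian_Sha[OF _ assms(2)])
qed

end
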